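(* Let $R=S/J$ be a complete intersection SAGA of codimension $n+1$ presented by quadrics, and suppose $w,z\in R^1\setminus\{0\}$ satisfy $zw=0$. Then $(z)=(0:w)$ as ideals of $R$, and $\bar R=R/(z)$ is a complete intersection SAGA of codimension $n$ presented by quadrics. In particular, $\dim K^s_w=\dim R^{s-1}-\dim K^{s-1}_z$ for all $s\ge1$.
   Context: $\mathbb K$ is an algebraically closed field of characteristic $0$. A complete intersection SAGA of codimension $n+1$ presented by quadrics is $R=S/J$, $S=\mathbb K[x_0,\dots,x_n]$, $J$ generated by a regular sequence of $n+1$ homogeneous quadrics (socle degree $n+1$). For $q\in R^s$, $K^a_q=\ker(q\cdot:R^a\to R^{a+s})$, with $K^0_q=\ker(q\cdot:R^0\to R^s)$. $(0:w)=\{r\in R\mid rw=0\}$. *)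

theory Defs
  imports "HOL-Library.Poly_Mapping" "HOL-Computational_Algebra.Polynomial"
begin

text \<open>Multivariate polynomials over a field K in variables x_0, x_1, ...:
  a polynomial is a finitely supported map from monomials (exponent vectors
  nat =>0 nat) to coefficients.\<close>

type_synonym 'a mpoly = "(nat \<Rightarrow>\<^sub>0 nat) \<Rightarrow>\<^sub>0 'a"

definition alg_closed_field :: "'a::field itself \<Rightarrow> bool" where
  "alg_closed_field _ \<longleftrightarrow> (\<forall>p::'a poly. 0 < Polynomial.degree p \<longrightarrow> (\<exists>x. poly p x = 0))"

definition const :: "'a::comm_ring_1 \<Rightarrow> 'a mpoly" where
  "const c = Poly_Mapping.single 0 c"

definition var :: "nat \<Rightarrow> 'a::comm_ring_1 mpoly" where
  "var i = Poly_Mapping.single (Poly_Mapping.single i 1) 1"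

definition smul :: "'a::comm_ring_1 \<Rightarrow> 'a mpoly \<Rightarrow> 'a mpoly" where
  "smul c p = const c * p"

definition tdeg :: "(nat \<Rightarrow>\<^sub>0 nat) \<Rightarrow> nat" where
  "tdeg m = sum (Poly_Mapping.lookup m) (Poly_Mapping.keys m)"

definition PR :: "nat \<Rightarrow> 'a::comm_ring_1 mpoly set" where
  "PR N = {p. \<forall>m\<in>Poly_Mapping.keys p. Poly_Mapping.keys m \<subseteq> {..<N}}"

definition homogeneous :: "nat \<Rightarrow> 'a::comm_ring_1 mpoly \<Rightarrow> bool" where
  "homogeneous d p \<longleftrightarrow> (\<forall>m\<in>Poly_Mapping.keys p. tdeg m = d)"

definition Hom :: "nat \<Rightarrow> nat \<Rightarrow> 'a::comm_ring_1 mpoly set" where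
  "Hom N d = {p \<in> PR N. homogeneous d p}"

definition gen_ideal :: "nat \<Rightarrow> 'a::comm_ring_1 mpoly list \<Rightarrow> 'a mpoly set" where
  "gen_ideal N gs = {p. \<exists>c. (\<forall>i<length gs. c i \<in> PR N) \<and> p = (\<Sum>i<length gs. c i * gs ! i)}"

definition regular_seq :: "nat \<Rightarrow> 'a::comm_ring_1 mpoly list \<Rightarrow> bool" where
  "regular_seq N gs \<longleftrightarrow> set gs \<subseteq> PR N \<and> gen_ideal N gs \<noteq> PR N \<and>
     (\<forall>i<length gs. \<forall>f\<in>PR N. f * gs ! i \<in> gen_ideal N (take i gs) \<longrightarrow> f \<in> gen_ideal N (take i gs))"

text \<open>qs presents a complete intersection SAGA of codimension N by quadrics:
  R = K[x_0,...,x_{N-1}] / (qs), with qs a regular sequence of N homogeneous quadrics.\<close>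
definition CI_quadric_presentation :: "nat \<Rightarrow> 'a::comm_ring_1 mpoly list \<Rightarrow> bool" where
  "CI_quadric_presentation N qs \<longleftrightarrow> length qs = N \<and> set qs \<subseteq> Hom N 2 \<and> regular_seq N qs"

definition subst :: "(nat \<Rightarrow> 'a::comm_ring_1 mpoly) \<Rightarrow> 'a mpoly \<Rightarrow> 'a mpoly" where
  "subst \<sigma> p = (\<Sum>m\<in>Poly_Mapping.keys p. const (Poly_Mapping.lookup p m) * (\<Prod>i\<in>Poly_Mapping.keys m. \<sigma> i ^ Poly_Mapping.lookup m i))"

definition kdim :: "'a::field mpoly set \<Rightarrow> nat" where
  "kdim U = vector_space.dim smul U"

definition qdim :: "'a::field mpoly set \<Rightarrow> 'a mpoly set \<Rightarrow> int" where
  "qdim U W = int (kdim U) - int (kdim W)"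

text \<open>R^s = S^s / (J \<inter> S^s) and K^s_q = ker(q : R^s \<rightarrow> R^{s+deg q}) = {f \<in> S^s. f q \<in> J} / (J \<inter> S^s).\<close>
definition Rdim :: "nat \<Rightarrow> 'a::field mpoly set \<Rightarrow> nat \<Rightarrow> int" where
  "Rdim N J s = qdim (Hom N s) (J \<inter> Hom N s)"

definition Kdim :: "nat \<Rightarrow> 'a::field mpoly set \<Rightarrow> 'a mpoly \<Rightarrow> nat \<Rightarrow> int" where
  "Kdim N J q s = qdim {f \<in> Hom N s. f * q \<in> J} (J \<inter> Hom N s)"

end

theory Submission
  imports Defs "HOL-Library.FuncSet"
begin

text \<open>Write \<open>J = (q\<^sub>0, \<dots>, q\<^sub>n)\<close>. The quadric \<open>zw \<in> J\<close> is a scalar combination of the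
  \<open>q\<^sub>i\<close>, so it can replace one of them in the regular sequence; since regular sequences of
  forms of positive degree may be permuted, \<open>J = (p\<^sub>1, \<dots>, p\<^sub>n, zw)\<close> with this sequence
  regular. Then \<open>z\<close> and \<open>w\<close> are nonzerodivisors modulo \<open>P = (p\<^sub>1, \<dots>, p\<^sub>n)\<close>, which gives
  \<open>(J : w) = P + (z) = J + (z)\<close> and makes \<open>p\<^sub>1, \<dots>, p\<^sub>n, z\<close> regular. Eliminating one
  variable with the linear form \<open>z\<close> identifies \<open>S/(P + (z))\<close> with a polynomial ring in
  \<open>n\<close> variables modulo the images of the \<open>p\<^sub>i\<close>, again a complete intersection of quadrics.
  Finally, the forms of degree \<open>s\<close> in \<open>J + (z)\<close> are \<open>z S\<^sup>s\<^sup>-\<^sup>1 + J\<^sub>s\<close>, and counting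
  dimensions gives \<open>dim K\<^sup>s\<^sub>w = dim R\<^sup>s\<^sup>-\<^sup>1 - dim K\<^sup>s\<^sup>-\<^sup>1\<^sub>z\<close>.\<close>

lemma const_add: "const (a + b) = const a + (const b :: 'a::comm_ring_1 mpoly)"
  by (simp add: const_def single_add)

lemma const_mult: "const (a * b) = const a * (const b :: 'a::comm_ring_1 mpoly)"
  by (simp add: const_def mult_single)

lemma const_0[simp]: "const 0 = (0 :: 'a::comm_ring_1 mpoly)"
  by (simp add: const_def)

lemma const_1[simp]: "const 1 = (1 :: 'a::comm_ring_1 mpoly)"
  by (simp add: const_def)

lemma const_uminus: "const (- a) = - (const a :: 'a::comm_ring_1 mpoly)"
  by (simp add: const_def single_uminus)

lemma const_eq_iff[simp]: "const a = (const b :: 'a::comm_ring_1 mpoly) \<longleftrightarrow> a = b"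
  unfolding const_def by (metis Poly_Mapping.lookup_single_eq)

lemma lookup_const: "Poly_Mapping.lookup (const c) m = (if m = 0 then c else 0)"
  by (simp add: const_def lookup_single)

lemma single_const: "Poly_Mapping.single m c = const c * Poly_Mapping.single m (1::'a::comm_ring_1)"
  by (simp add: const_def mult_single)

lemma poly_mapping_expansion: "p = (\<Sum>m\<in>Poly_Mapping.keys p. Poly_Mapping.single m (Poly_Mapping.lookup p m))"
proof (rule poly_mapping_eqI)
  fix k
  have "Poly_Mapping.lookup (\<Sum>m\<in>Poly_Mapping.keys p. Poly_Mapping.single m (Poly_Mapping.lookup p m)) k
      = (\<Sum>m\<in>Poly_Mapping.keys p. (if m = k then Poly_Mapping.lookup p m else 0))"
    by (simp add: lookup_sum lookup_single when_def)
  also have "\<dots> = Poly_Mapping.lookup p k"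
    by (simp add: in_keys_iff)
  finally show "Poly_Mapping.lookup p k = Poly_Mapping.lookup (\<Sum>m\<in>Poly_Mapping.keys p. Poly_Mapping.single m (Poly_Mapping.lookup p m)) k" by simp
qed

lemma poly_mapping_expansion_superset:
  assumes "finite A" "Poly_Mapping.keys p \<subseteq> A"
  shows "p = (\<Sum>m\<in>A. Poly_Mapping.single m (Poly_Mapping.lookup p m))"
proof -
  have "(\<Sum>m\<in>A. Poly_Mapping.single m (Poly_Mapping.lookup p m)) = (\<Sum>m\<in>Poly_Mapping.keys p. Poly_Mapping.single m (Poly_Mapping.lookup p m))"
    by (rule sum.mono_neutral_right) (use assms in \<open>auto simp: in_keys_iff\<close>)
  then show ?thesis using poly_mapping_expansion[of p] by simp
qed

lemma keys_add_nat: "Poly_Mapping.keys (m + (m'::'b \<Rightarrow>\<^sub>0 nat)) = Poly_Mapping.keys m \<union> Poly_Mapping.keys m'"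
  by (auto simp: in_keys_iff lookup_add)

lemma tdeg_superset: "finite A \<Longrightarrow> Poly_Mapping.keys m \<subseteq> A \<Longrightarrow> tdeg m = (\<Sum>i\<in>A. Poly_Mapping.lookup m i)"
  unfolding tdeg_def by (rule sum.mono_neutral_left) (auto simp: in_keys_iff)

lemma tdeg_add: "tdeg (m + m') = tdeg m + tdeg m'"
proof -
  let ?A = "Poly_Mapping.keys m \<union> Poly_Mapping.keys m'"
  have "tdeg (m + m') = (\<Sum>i\<in>?A. Poly_Mapping.lookup (m+m') i)"
    by (rule tdeg_superset) (auto simp: keys_add_nat)
  also have "\<dots> = (\<Sum>i\<in>?A. Poly_Mapping.lookup m i) + (\<Sum>i\<in>?A. Poly_Mapping.lookup m' i)"
    by (simp add: lookup_add sum.distrib)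
  also have "\<dots> = tdeg m + tdeg m'"
    by (simp add: tdeg_superset[symmetric])
  finally show ?thesis .
qed

lemma tdeg_0[simp]: "tdeg 0 = 0" by (simp add: tdeg_def)

lemma tdeg_eq_0: "tdeg m = 0 \<longleftrightarrow> m = 0"
proof
  assume "tdeg m = 0"
  then have "\<forall>i\<in>Poly_Mapping.keys m. Poly_Mapping.lookup m i = 0" unfolding tdeg_def by simp
  then show "m = 0" by (auto simp: in_keys_iff intro!: poly_mapping_eqI)
qed simp

lemma tdeg_single: "tdeg (Poly_Mapping.single i k) = k"
  by (simp add: tdeg_def)

lemma PR_0[simp]: "0 \<in> PR N" by (simp add: PR_def)

lemma PR_const[simp]: "const c \<in> PR N" by (simp add: PR_def const_def)

lemma PR_1[simp]: "1 \<in> PR N" using PR_const[of 1 N] by simp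

lemma PR_var: "i < N \<Longrightarrow> var i \<in> PR N" by (simp add: PR_def var_def)

lemma PR_add: "p \<in> PR N \<Longrightarrow> q \<in> PR N \<Longrightarrow> p + q \<in> PR N"
  unfolding PR_def using keys_add[of p q] by blast

lemma PR_uminus: "p \<in> PR N \<Longrightarrow> - p \<in> PR N"
  unfolding PR_def by (simp add: keys_minus)

lemma PR_diff: "p \<in> PR N \<Longrightarrow> q \<in> PR N \<Longrightarrow> p - q \<in> PR N"
  using PR_add[OF _ PR_uminus] by (metis diff_conv_add_uminus)

lemma PR_mult: "p \<in> PR N \<Longrightarrow> q \<in> PR N \<Longrightarrow> p * q \<in> PR N"
  unfolding PR_def using keys_mult[of p q] by (force simp: keys_add_nat)

lemma PR_sum: "(\<And>x. x \<in> A \<Longrightarrow> f x \<in> PR N) \<Longrightarrow> sum f A \<in> PR N"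
  by (induction A rule: infinite_finite_induct) (auto intro: PR_add)

lemma PR_prod: "(\<And>x. x \<in> A \<Longrightarrow> f x \<in> PR N) \<Longrightarrow> prod f A \<in> PR N"
  by (induction A rule: infinite_finite_induct) (auto intro: PR_mult)

lemma PR_power: "p \<in> PR N \<Longrightarrow> p ^ k \<in> PR N"
  by (induction k) (auto intro: PR_mult)

lemma homogeneous_0[simp]: "homogeneous d 0" by (simp add: homogeneous_def)

lemma homogeneous_add: "homogeneous d p \<Longrightarrow> homogeneous d q \<Longrightarrow> homogeneous d (p + q)"
  unfolding homogeneous_def using keys_add[of p q] by blast

lemma homogeneous_uminus: "homogeneous d p \<Longrightarrow> homogeneous d (- p)"
  unfolding homogeneous_def by (simp add: keys_minus)

lemma homogeneous_mult: "homogeneous d p \<Longrightarrow> homogeneous e q \<Longrightarrow> homogeneous (d + e) (p * q)"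
  unfolding homogeneous_def using keys_mult[of p q] by (force simp: tdeg_add)

lemma homogeneous_sum: "(\<And>x. x \<in> A \<Longrightarrow> homogeneous d (f x)) \<Longrightarrow> homogeneous d (sum f A)"
  by (induction A rule: infinite_finite_induct) (auto intro: homogeneous_add)

lemma homogeneous_const: "homogeneous 0 (const c)"
  by (simp add: homogeneous_def const_def)

lemma homogeneous_const_mult: "homogeneous d p \<Longrightarrow> homogeneous d (const c * p)"
  using homogeneous_mult[OF homogeneous_const] by fastforce

lemma homogeneous_1: "homogeneous 0 1"
  using homogeneous_const[of 1] by simp

lemma homogeneous_power: "homogeneous d p \<Longrightarrow> homogeneous (k * d) (p ^ k)"
  by (induction k) (auto simp: homogeneous_1 dest: homogeneous_mult)

lemma homogeneous_var: "homogeneous 1 (var i)"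
  by (simp add: homogeneous_def var_def tdeg_single)

lemma homogeneous_prod: "(\<And>x. x \<in> A \<Longrightarrow> homogeneous (d x) (f x)) \<Longrightarrow> homogeneous (sum d A) (prod f A)"
  by (induction A rule: infinite_finite_induct) (auto simp: homogeneous_1 intro: homogeneous_mult)

lemma Hom_iff: "p \<in> Hom N d \<longleftrightarrow> p \<in> PR N \<and> homogeneous d p"
  by (simp add: Hom_def)

lift_definition hcomp :: "nat \<Rightarrow> 'a::zero mpoly \<Rightarrow> 'a mpoly" is
  "\<lambda>d f m. if tdeg m = d then f m else 0"
  by (rule finite_subset[rotated], assumption) auto

lemma lookup_hcomp: "Poly_Mapping.lookup (hcomp d p) m = (if tdeg m = d then Poly_Mapping.lookup p m else 0)"
  by transfer simp

lemma keys_hcomp: "Poly_Mapping.keys (hcomp d p) \<subseteq> Poly_Mapping.keys p"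
  by (auto simp: in_keys_iff lookup_hcomp split: if_splits)

lemma hcomp_add: "hcomp d (p + q) = hcomp d p + hcomp d (q :: 'a::comm_monoid_add mpoly)"
  by (rule poly_mapping_eqI) (simp add: lookup_hcomp lookup_add)

lemma hcomp_0[simp]: "hcomp d 0 = 0"
  by (rule poly_mapping_eqI) (simp add: lookup_hcomp)

lemma hcomp_sum: "hcomp d (sum f A) = (\<Sum>x\<in>A. hcomp d (f x :: 'a::comm_monoid_add mpoly))"
  by (induction A rule: infinite_finite_induct) (auto simp: hcomp_add)

lemma homogeneous_hcomp: "homogeneous d (hcomp d p)"
  by (auto simp: homogeneous_def in_keys_iff lookup_hcomp split: if_splits)

lemma PR_hcomp: "p \<in> PR N \<Longrightarrow> hcomp d p \<in> PR N"
  using keys_hcomp by (force simp: PR_def)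

lemma Hom_hcomp: "p \<in> PR N \<Longrightarrow> hcomp d p \<in> Hom N d"
  by (simp add: Hom_iff PR_hcomp homogeneous_hcomp)

lemma hcomp_homogeneous_same: "homogeneous d p \<Longrightarrow> hcomp d p = p"
  by (rule poly_mapping_eqI) (auto simp: lookup_hcomp homogeneous_def in_keys_iff)

lemma hcomp_homogeneous_other: "homogeneous e p \<Longrightarrow> e \<noteq> d \<Longrightarrow> hcomp d p = 0"
  by (rule poly_mapping_eqI) (auto simp: lookup_hcomp homogeneous_def in_keys_iff)

lemma hcomp_decomp: "p = (\<Sum>d\<in>tdeg ` Poly_Mapping.keys p. hcomp d (p :: 'a::comm_monoid_add mpoly))"
proof (rule poly_mapping_eqI)
  fix m
  have "Poly_Mapping.lookup (\<Sum>d\<in>tdeg ` Poly_Mapping.keys p. hcomp d p) m = (\<Sum>d\<in>tdeg ` Poly_Mapping.keys p. if d = tdeg m then Poly_Mapping.lookup p m else 0)"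
    by (simp add: lookup_sum lookup_hcomp eq_commute)
  also have "\<dots> = Poly_Mapping.lookup p m"
    by (auto simp: in_keys_iff)
  finally show "Poly_Mapping.lookup p m = Poly_Mapping.lookup (\<Sum>d\<in>tdeg ` Poly_Mapping.keys p. hcomp d p) m" by simp
qed

lemma hcomp_not_deg: "d \<notin> tdeg ` Poly_Mapping.keys p \<Longrightarrow> hcomp d p = 0"
  by (rule poly_mapping_eqI) (auto simp: lookup_hcomp in_keys_iff)

lemma hcomp_mult_homogeneous:
  fixes p q :: "'a::comm_ring_1 mpoly"
  assumes q: "homogeneous e q"
  shows "hcomp k (p * q) = (if e \<le> k then hcomp (k - e) p * q else 0)"
proof -
  let ?T = "tdeg ` Poly_Mapping.keys p"
  have "p * q = (\<Sum>d\<in>?T. hcomp d p * q)"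
    by (subst hcomp_decomp[of p]) (simp add: sum_distrib_right)
  then have "hcomp k (p * q) = (\<Sum>d\<in>?T. hcomp k (hcomp d p * q))"
    by (simp add: hcomp_sum)
  also have "\<dots> = (\<Sum>d\<in>?T. if d + e = k then hcomp d p * q else 0)"
  proof (rule sum.cong[OF refl])
    fix d
    have h: "homogeneous (d + e) (hcomp d p * q)" by (rule homogeneous_mult[OF homogeneous_hcomp q])
    show "hcomp k (hcomp d p * q) = (if d + e = k then hcomp d p * q else 0)"
      using hcomp_homogeneous_same[OF h] hcomp_homogeneous_other[OF h] by auto
  qed
  also have "\<dots> = (if e \<le> k then hcomp (k - e) p * q else 0)"
  proof (cases "e \<le> k")
    case True
    have "(\<Sum>d\<in>?T. if d + e = k then hcomp d p * q else 0) = (\<Sum>d\<in>?T. if d = k - e then hcomp (k - e) p * q else 0)"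
      by (rule sum.cong) (use True in auto)
    also have "\<dots> = (if k - e \<in> ?T then hcomp (k - e) p * q else 0)"
      by (simp add: sum.delta)
    also have "\<dots> = hcomp (k - e) p * q"
      using hcomp_not_deg[of "k - e" p] by auto
    finally show ?thesis using True by simp
  next
    case False
    then have "\<forall>d. d + e \<noteq> k" by auto
    then show ?thesis using False by simp
  qed
  finally show ?thesis .
qed

lemma hcomp_zero_const: "hcomp 0 p = const (Poly_Mapping.lookup p 0)"
  by (rule poly_mapping_eqI) (auto simp: lookup_hcomp lookup_const tdeg_eq_0)

lemma gen_ideal_PR: "set gs \<subseteq> PR N \<Longrightarrow> gen_ideal N gs \<subseteq> PR N"
  unfolding gen_ideal_def by (auto intro!: PR_sum PR_mult)

lemma gen_ideal_0[simp]: "0 \<in> gen_ideal N gs"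
  unfolding gen_ideal_def by (rule CollectI, rule exI[of _ "\<lambda>_. 0"]) simp

lemma gen_ideal_add: "a \<in> gen_ideal N gs \<Longrightarrow> b \<in> gen_ideal N gs \<Longrightarrow> a + b \<in> gen_ideal N gs"
proof -
  assume "a \<in> gen_ideal N gs" "b \<in> gen_ideal N gs"
  then obtain c d where c: "\<forall>i<length gs. c i \<in> PR N" "a = (\<Sum>i<length gs. c i * gs ! i)"
    and d: "\<forall>i<length gs. d i \<in> PR N" "b = (\<Sum>i<length gs. d i * gs ! i)"
    unfolding gen_ideal_def by blast
  show ?thesis unfolding gen_ideal_def
    by (rule CollectI, rule exI[of _ "\<lambda>i. c i + d i"])
      (simp add: c d PR_add distrib_right sum.distrib)
qed

lemma gen_ideal_mult: "r \<in> PR N \<Longrightarrow> a \<in> gen_ideal N gs \<Longrightarrow> r * a \<in> gen_ideal N gs"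
proof -
  assume r: "r \<in> PR N" and "a \<in> gen_ideal N gs"
  then obtain c where c: "\<forall>i<length gs. c i \<in> PR N" "a = (\<Sum>i<length gs. c i * gs ! i)"
    unfolding gen_ideal_def by blast
  show ?thesis unfolding gen_ideal_def
    by (rule CollectI, rule exI[of _ "\<lambda>i. r * c i"])
      (simp add: c r PR_mult sum_distrib_left mult.assoc)
qed

lemma gen_ideal_uminus: "a \<in> gen_ideal N gs \<Longrightarrow> - a \<in> gen_ideal N gs"
proof -
  assume "a \<in> gen_ideal N gs"
  moreover have "-1 \<in> PR N" using PR_uminus[OF PR_1] .
  ultimately show ?thesis using gen_ideal_mult[of "-1" N a gs] by simp
qed

lemma gen_ideal_diff: "a \<in> gen_ideal N gs \<Longrightarrow> b \<in> gen_ideal N gs \<Longrightarrow> a - b \<in> gen_ideal N gs"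
  by (metis diff_conv_add_uminus gen_ideal_add gen_ideal_uminus)

lemma gen_ideal_sum: "(\<And>x. x \<in> A \<Longrightarrow> f x \<in> gen_ideal N gs) \<Longrightarrow> sum f A \<in> gen_ideal N gs"
  by (induction A rule: infinite_finite_induct) (auto intro: gen_ideal_add)

lemma gen_ideal_nth: "i < length gs \<Longrightarrow> gs ! i \<in> gen_ideal N gs"
proof -
  assume i: "i < length gs"
  have "(\<Sum>k<length gs. (if k = i then 1 else 0) * gs ! k) = (\<Sum>k<length gs. if k = i then gs ! k else 0)"
    by (rule sum.cong) auto
  also have "\<dots> = gs ! i" using i by (simp add: sum.delta)
  finally show ?thesis unfolding gen_ideal_def
    by (intro CollectI exI[of _ "\<lambda>k. if k = i then 1 else 0"]) auto
qed

lemma gen_ideal_mem: "g \<in> set gs \<Longrightarrow> g \<in> gen_ideal N gs"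
  by (metis gen_ideal_nth in_set_conv_nth)

lemma gen_ideal_subset:
  assumes "set gs \<subseteq> gen_ideal N hs"
  shows "gen_ideal N gs \<subseteq> gen_ideal N hs"
proof
  fix p assume "p \<in> gen_ideal N gs"
  then obtain c where c: "\<forall>i<length gs. c i \<in> PR N" "p = (\<Sum>i<length gs. c i * gs ! i)"
    unfolding gen_ideal_def by blast
  show "p \<in> gen_ideal N hs" unfolding c(2)
    by (rule gen_ideal_sum) (use assms c(1) in \<open>auto intro!: gen_ideal_mult\<close>)
qed

lemma gen_ideal_mono: "set gs \<subseteq> set hs \<Longrightarrow> gen_ideal N gs \<subseteq> gen_ideal N hs"
  by (rule gen_ideal_subset) (auto intro: gen_ideal_mem)

lemma gen_ideal_set_eq: "set gs = set hs \<Longrightarrow> gen_ideal N gs = gen_ideal N hs"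
  by (simp add: gen_ideal_mono subset_antisym)

lemma gen_ideal_snoc:
  fixes z :: "'a::comm_ring_1 mpoly"
  shows "gen_ideal N (gs @ [z]) = {a + c * z | a c. a \<in> gen_ideal N gs \<and> c \<in> PR N}"
proof safe
  fix p assume "p \<in> gen_ideal N (gs @ [z])"
  then obtain c where c: "\<forall>i<Suc (length gs). c i \<in> PR N" "p = (\<Sum>i<Suc (length gs). c i * (gs @ [z]) ! i)"
    unfolding gen_ideal_def by auto
  have "p = (\<Sum>i<length gs. c i * gs ! i) + c (length gs) * z"
    unfolding c(2) by (simp add: nth_append)
  moreover have "(\<Sum>i<length gs. c i * gs ! i) \<in> gen_ideal N gs"
    unfolding gen_ideal_def using c(1) by (auto intro!: exI[of _ c])
  ultimately show "\<exists>a c. p = a + c * z \<and> a \<in> gen_ideal N gs \<and> c \<in> PR N"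
    using c(1) by blast
next
  fix a c :: "'a mpoly" assume a: "a \<in> gen_ideal N gs" and c: "c \<in> PR N"
  then obtain d where d: "\<forall>i<length gs. d i \<in> PR N" "a = (\<Sum>i<length gs. d i * gs ! i)"
    unfolding gen_ideal_def by blast
  show "a + c * z \<in> gen_ideal N (gs @ [z])"
    unfolding gen_ideal_def
    by (rule CollectI, rule exI[of _ "\<lambda>i. if i < length gs then d i else c"])
      (use c d in \<open>auto simp: nth_append\<close>)
qed

lemma gen_ideal_snoc_mem: "a \<in> gen_ideal N gs \<Longrightarrow> c \<in> PR N \<Longrightarrow> a + c * z \<in> gen_ideal N (gs @ [z])"
  by (auto simp: gen_ideal_snoc)

lemma gen_ideal_replace:
  assumes "x \<in> gen_ideal N (A @ [q] @ C)" "q \<in> gen_ideal N (A @ [x] @ C)"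
  shows "gen_ideal N (A @ [x] @ C) = gen_ideal N (A @ [q] @ C)"
proof
  show "gen_ideal N (A @ [x] @ C) \<subseteq> gen_ideal N (A @ [q] @ C)"
    by (rule gen_ideal_subset) (use assms(1) in \<open>auto intro: gen_ideal_mem\<close>)
  show "gen_ideal N (A @ [q] @ C) \<subseteq> gen_ideal N (A @ [x] @ C)"
    by (rule gen_ideal_subset) (use assms(2) in \<open>auto intro: gen_ideal_mem\<close>)
qed

lemma gen_ideal_exchange:
  fixes q :: "'a::field mpoly"
  assumes x: "x = a + const c * q" and a: "a \<in> gen_ideal N A" and c: "c \<noteq> 0"
  shows "x \<in> gen_ideal N (A @ [q] @ C)" and "q \<in> gen_ideal N (A @ [x] @ C)"
proof -
  have mono: "gen_ideal N A \<subseteq> gen_ideal N (A @ C')" for C' by (rule gen_ideal_mono) auto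
  have "a \<in> gen_ideal N (A @ [q] @ C)" using mono a by blast
  moreover have "const c * q \<in> gen_ideal N (A @ [q] @ C)"
    by (rule gen_ideal_mult[OF PR_const gen_ideal_mem]) simp
  ultimately show "x \<in> gen_ideal N (A @ [q] @ C)" by (simp add: x gen_ideal_add)
  have "a \<in> gen_ideal N (A @ [x] @ C)" using mono a by blast
  moreover have "x \<in> gen_ideal N (A @ [x] @ C)" by (rule gen_ideal_mem) simp
  ultimately have "const (inverse c) * (x - a) \<in> gen_ideal N (A @ [x] @ C)"
    by (intro gen_ideal_mult[OF PR_const] gen_ideal_diff)
  moreover have "const (inverse c) * (x - a) = q"
    using c by (simp add: x mult.assoc[symmetric] const_mult[symmetric])
  ultimately show "q \<in> gen_ideal N (A @ [x] @ C)" by simp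
qed

definition homogeneous_list :: "'a::comm_ring_1 mpoly list \<Rightarrow> bool" where
  "homogeneous_list gs \<longleftrightarrow> (\<forall>g\<in>set gs. \<exists>e. homogeneous e g)"

definition pos_homogeneous_list :: "'a::comm_ring_1 mpoly list \<Rightarrow> bool" where
  "pos_homogeneous_list gs \<longleftrightarrow> (\<forall>g\<in>set gs. \<exists>e>0. homogeneous e g)"

lemma gen_ideal_hcomp:
  assumes h: "homogeneous_list gs" and p: "p \<in> gen_ideal N gs"
  shows "hcomp k p \<in> gen_ideal N gs"
proof -
  obtain c where c: "\<forall>i<length gs. c i \<in> PR N" "p = (\<Sum>i<length gs. c i * gs ! i)"
    using p unfolding gen_ideal_def by blast
  define e where "e i = (SOME e. homogeneous e (gs ! i))" for i
  have e: "homogeneous (e i) (gs ! i)" if "i < length gs" for i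
    using h that unfolding homogeneous_list_def e_def by (meson nth_mem someI_ex)
  have "hcomp k p = (\<Sum>i<length gs. hcomp k (c i * gs ! i))"
    by (simp add: c hcomp_sum)
  also have "\<dots> = (\<Sum>i<length gs. (if e i \<le> k then hcomp (k - e i) (c i) else 0) * gs ! i)"
    by (rule sum.cong) (auto simp: hcomp_mult_homogeneous[OF e])
  finally show ?thesis unfolding gen_ideal_def
    using c(1) by (auto intro!: exI[of _ "\<lambda>i. if e i \<le> k then hcomp (k - e i) (c i) else 0"] PR_hcomp)
qed

lemma hcomp_0_gen_ideal:
  assumes h: "pos_homogeneous_list gs" and p: "p \<in> gen_ideal N gs"
  shows "hcomp 0 p = 0"
proof -
  obtain c where c: "\<forall>i<length gs. c i \<in> PR N" "p = (\<Sum>i<length gs. c i * gs ! i)"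
    using p unfolding gen_ideal_def by blast
  have "hcomp 0 (c i * gs ! i) = 0" if i: "i < length gs" for i
  proof -
    obtain e where "e > 0" "homogeneous e (gs ! i)" using h nth_mem[OF i] unfolding pos_homogeneous_list_def by blast
    then show ?thesis by (simp add: hcomp_mult_homogeneous)
  qed
  then show ?thesis by (simp add: c hcomp_sum)
qed

lemma one_notin_gen_ideal:
  assumes "pos_homogeneous_list (gs :: 'a::field mpoly list)"
  shows "1 \<notin> gen_ideal N gs"
proof
  assume "1 \<in> gen_ideal N gs"
  from hcomp_0_gen_ideal[OF assms this] have "hcomp 0 (1::'a mpoly) = 0" .
  moreover have "hcomp 0 (1::'a mpoly) = 1" by (rule hcomp_homogeneous_same[OF homogeneous_1])
  ultimately show False by simp
qed

lemma gen_ideal_ne_PR: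
  assumes "pos_homogeneous_list (gs :: 'a::field mpoly list)"
  shows "gen_ideal N gs \<noteq> PR N"
  using one_notin_gen_ideal[OF assms] PR_1 by blast

lemma homogeneous_listI: "set gs \<subseteq> Hom N d \<Longrightarrow> homogeneous_list gs"
  unfolding homogeneous_list_def by (meson Hom_iff subsetD)

lemma pos_homogeneous_list_linear_quadric:
  assumes "set gs \<subseteq> Hom N 1 \<union> Hom N 2"
  shows "pos_homogeneous_list gs"
  unfolding pos_homogeneous_list_def
proof
  fix g assume "g \<in> set gs"
  with assms have "homogeneous 1 g \<or> homogeneous 2 g" by (auto simp: Hom_iff)
  then show "\<exists>e>0. homogeneous e g" by (meson zero_less_one zero_less_numeral)
qed

lemma homogeneous_gen_ideal_scalar_coeffs:
  fixes gs :: "'a::field mpoly list"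
  assumes p: "p \<in> gen_ideal N gs" "homogeneous d p" and g: "set gs \<subseteq> Hom N d"
  shows "\<exists>b. p = (\<Sum>i<length gs. const (b i) * gs ! i)"
proof -
  obtain c where c: "\<forall>i<length gs. c i \<in> PR N" "p = (\<Sum>i<length gs. c i * gs ! i)"
    using p unfolding gen_ideal_def by blast
  have "p = hcomp d p" using hcomp_homogeneous_same[OF p(2)] by simp
  also have "\<dots> = (\<Sum>i<length gs. hcomp d (c i * gs ! i))" by (simp add: c(2) hcomp_sum)
  also have "\<dots> = (\<Sum>i<length gs. const (Poly_Mapping.lookup (c i) 0) * gs ! i)"
  proof (rule sum.cong[OF refl])
    fix i assume "i \<in> {..<length gs}"
    then have "gs ! i \<in> Hom N d" using g nth_mem[of i gs] by auto
    then have "homogeneous d (gs ! i)" by (simp add: Hom_iff)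
    then show "hcomp d (c i * gs ! i) = const (Poly_Mapping.lookup (c i) 0) * gs ! i"
      by (simp add: hcomp_mult_homogeneous hcomp_zero_const)
  qed
  finally show ?thesis by (rule exI[of _ "\<lambda>i. Poly_Mapping.lookup (c i) 0"])
qed

section \<open>Weakly regular sequences\<close>

definition nonzerodivisor :: "nat \<Rightarrow> 'a::comm_ring_1 mpoly set \<Rightarrow> 'a mpoly \<Rightarrow> bool" where
  "nonzerodivisor N I x \<longleftrightarrow> (\<forall>f\<in>PR N. f * x \<in> I \<longrightarrow> f \<in> I)"

definition weakly_regular :: "nat \<Rightarrow> 'a::comm_ring_1 mpoly list \<Rightarrow> bool" where
  "weakly_regular N gs \<longleftrightarrow> (\<forall>i<length gs. nonzerodivisor N (gen_ideal N (take i gs)) (gs ! i))"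

lemma regular_seq_iff: "regular_seq N gs \<longleftrightarrow> set gs \<subseteq> PR N \<and> gen_ideal N gs \<noteq> PR N \<and> weakly_regular N gs"
  by (simp add: regular_seq_def weakly_regular_def nonzerodivisor_def)

lemma nonzerodivisor_homogeneousI:
  assumes a: "homogeneous_list a" and y: "homogeneous dy y"
    and H: "\<And>d m. m \<in> PR N \<Longrightarrow> homogeneous d m \<Longrightarrow> m * y \<in> gen_ideal N a \<Longrightarrow> m \<in> gen_ideal N a"
  shows "nonzerodivisor N (gen_ideal N a) y"
  unfolding nonzerodivisor_def
proof safe
  fix f assume f: "f \<in> PR N" "f * y \<in> gen_ideal N a"
  have "hcomp e f \<in> gen_ideal N a" for e
  proof -
    have "hcomp (e + dy) (f * y) \<in> gen_ideal N a" by (rule gen_ideal_hcomp[OF a f(2)])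
    then have "hcomp e f * y \<in> gen_ideal N a" by (simp add: hcomp_mult_homogeneous[OF y])
    then show ?thesis by (rule H[OF PR_hcomp[OF f(1)] homogeneous_hcomp])
  qed
  then show "f \<in> gen_ideal N a" by (subst hcomp_decomp) (rule gen_ideal_sum)
qed

text \<open>By induction on the degree of \<open>m\<close>, which drops by \<open>deg x > 0\<close> in each step.\<close>

lemma nonzerodivisor_swap_first:
  fixes x y :: "'a::comm_ring_1 mpoly"
  assumes a: "homogeneous_list a"
    and x: "x \<in> PR N" "homogeneous dx x" "dx > 0"
    and y: "y \<in> PR N" "homogeneous dy y"
    and nx: "nonzerodivisor N (gen_ideal N a) x" and ny: "nonzerodivisor N (gen_ideal N (a @ [x])) y"
  shows "nonzerodivisor N (gen_ideal N a) y"
proof (rule nonzerodivisor_homogeneousI[OF a y(2)])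
  let ?I = "gen_ideal N a"
  fix d m assume "m \<in> PR N" "homogeneous d m" "m * y \<in> ?I"
  then show "m \<in> ?I"
  proof (induction d arbitrary: m rule: less_induct)
    case (less d)
    have "?I \<subseteq> gen_ideal N (a @ [x])" by (rule gen_ideal_mono) auto
    then have "m \<in> gen_ideal N (a @ [x])" using ny less.prems unfolding nonzerodivisor_def by blast
    then obtain i c where ic: "m = i + c * x" "i \<in> ?I" "c \<in> PR N"
      unfolding gen_ideal_snoc by blast
    have hi: "hcomp d i \<in> ?I" by (rule gen_ideal_hcomp[OF a ic(2)])
    have mdec: "m = hcomp d i + (if dx \<le> d then hcomp (d - dx) c * x else 0)"
      using hcomp_homogeneous_same[OF less.prems(2)] ic(1)
      by (simp add: hcomp_add hcomp_mult_homogeneous[OF x(2)])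
    show "m \<in> ?I"
    proof (cases "dx \<le> d")
      case False
      then show ?thesis using mdec hi by simp
    next
      case True
      let ?m' = "hcomp (d - dx) c"
      have m': "?m' \<in> PR N" "homogeneous (d - dx) ?m'" using ic(3) by (auto simp: PR_hcomp homogeneous_hcomp)
      have "(?m' * y) * x = m * y - hcomp d i * y"
        using mdec True by (simp add: algebra_simps)
      also have "\<dots> \<in> ?I"
        by (rule gen_ideal_diff[OF less.prems(3)]) (simp add: mult.commute gen_ideal_mult[OF y(1) hi])
      finally have "?m' * y \<in> ?I"
        using nx m' y(1) PR_mult unfolding nonzerodivisor_def by blast
      then have "?m' \<in> ?I" using less.IH[of "d - dx"] True x(3) m' by auto
      then show ?thesis using mdec True hi
        by (simp add: gen_ideal_add gen_ideal_mult mult.commute x(1))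
    qed
  qed
qed

lemma nonzerodivisor_swap_second:
  assumes y: "y \<in> PR N"
    and nx: "nonzerodivisor N (gen_ideal N a) x" and ny: "nonzerodivisor N (gen_ideal N (a @ [x])) y"
  shows "nonzerodivisor N (gen_ideal N (a @ [y])) x"
  unfolding nonzerodivisor_def
proof safe
  let ?I = "gen_ideal N a"
  fix f assume f: "f \<in> PR N" "f * x \<in> gen_ideal N (a @ [y])"
  then obtain i c where ic: "f * x = i + c * y" "i \<in> ?I" "c \<in> PR N"
    unfolding gen_ideal_snoc by blast
  have Isub: "?I \<subseteq> gen_ideal N (a @ [x])" by (rule gen_ideal_mono) auto
  have "c * y = f * x - i" using ic(1) by simp
  also have "\<dots> \<in> gen_ideal N (a @ [x])"
    by (rule gen_ideal_diff) (use Isub ic(2) gen_ideal_snoc_mem[OF gen_ideal_0[of N a] f(1), of x] in auto)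
  finally have "c \<in> gen_ideal N (a @ [x])" using ny ic(3) unfolding nonzerodivisor_def by blast
  then obtain i' c' where ic': "c = i' + c' * x" "i' \<in> ?I" "c' \<in> PR N"
    unfolding gen_ideal_snoc by blast
  have "(f - c' * y) * x = i + i' * y"
    using ic(1) ic'(1) by (simp add: algebra_simps)
  also have "\<dots> \<in> ?I"
    using gen_ideal_add[OF ic(2) gen_ideal_mult[OF y ic'(2)]] by (simp add: mult.commute)
  finally have "f - c' * y \<in> ?I"
    using nx f(1) ic'(3) y unfolding nonzerodivisor_def by (meson PR_diff PR_mult)
  then have "(f - c' * y) + c' * y \<in> gen_ideal N (a @ [y])"
    using ic'(3) by (rule gen_ideal_snoc_mem)
  then show "f \<in> gen_ideal N (a @ [y])" by simp
qed

lemma weakly_regular_swap: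
  fixes x y :: "'a::comm_ring_1 mpoly"
  assumes r: "weakly_regular N (a @ [x, y] @ b)" and P: "set (a @ [x, y] @ b) \<subseteq> PR N"
    and ph: "pos_homogeneous_list (a @ [x, y] @ b)"
  shows "weakly_regular N (a @ [y, x] @ b)"
  unfolding weakly_regular_def
proof (intro allI impI)
  let ?L = "a @ [x, y] @ b" and ?L' = "a @ [y, x] @ b"
  fix i assume i: "i < length ?L'"
  have H: "nonzerodivisor N (gen_ideal N (take i ?L)) (?L ! i)" if "i < length ?L" for i
    using r that unfolding weakly_regular_def by blast
  have ah: "homogeneous_list a" using ph by (auto simp: homogeneous_list_def pos_homogeneous_list_def)
  obtain dx where dx: "dx > 0" "homogeneous dx x" using ph by (auto simp: pos_homogeneous_list_def)
  obtain dy where dy: "homogeneous dy y" using ph by (auto simp: pos_homogeneous_list_def)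
  have xP: "x \<in> PR N" and yP: "y \<in> PR N" using P by auto
  have H0: "nonzerodivisor N (gen_ideal N a) x" using H[of "length a"] by (simp add: nth_append)
  have H1: "nonzerodivisor N (gen_ideal N (a @ [x])) y"
    using H[of "Suc (length a)"] by (simp add: nth_append take_append)
  consider "i < length a" | "i = length a" | "i = Suc (length a)" | k where "i = length a + 2 + k"
    by (metis add_2_eq_Suc' add_Suc_right le_add_diff_inverse linorder_not_less
        Suc_lessI less_Suc_eq)
  then show "nonzerodivisor N (gen_ideal N (take i ?L')) (?L' ! i)"
  proof cases
    case 1
    then show ?thesis using H[of i] by (simp add: nth_append take_append)
  next
    case 2
    then show ?thesis using nonzerodivisor_swap_first[OF ah xP dx(2) dx(1) yP dy H0 H1] by (simp add: nth_append)
  next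
    case 3
    then show ?thesis using nonzerodivisor_swap_second[OF yP H0 H1]
      by (simp add: nth_append take_append)
  next
    case 4
    then have "take i ?L' = a @ [y, x] @ take k b" "take i ?L = a @ [x, y] @ take k b"
      "?L' ! i = ?L ! i" "i < length ?L"
      using i by (simp_all add: nth_append take_append numeral_2_eq_2)
    moreover have "gen_ideal N (a @ [y, x] @ take k b) = gen_ideal N (a @ [x, y] @ take k b)"
      by (rule gen_ideal_set_eq) auto
    ultimately show ?thesis using H[of i] by simp
  qed
qed

lemma weakly_regular_move_end:
  fixes x :: "'a::comm_ring_1 mpoly"
  assumes "weakly_regular N (a @ [x] @ b)" "set (a @ [x] @ b) \<subseteq> PR N" "pos_homogeneous_list (a @ [x] @ b)"
  shows "weakly_regular N (a @ b @ [x])"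
  using assms
proof (induction b arbitrary: a)
  case Nil then show ?case by simp
next
  case (Cons y b)
  have "weakly_regular N (a @ [y, x] @ b)"
    by (rule weakly_regular_swap) (use Cons.prems in simp_all)
  then have "weakly_regular N ((a @ [y]) @ [x] @ b)" by simp
  then have "weakly_regular N ((a @ [y]) @ b @ [x])"
    by (rule Cons.IH) (use Cons.prems in \<open>auto simp: pos_homogeneous_list_def\<close>)
  then show ?case by simp
qed

lemma weakly_regular_move_front:
  fixes x :: "'a::comm_ring_1 mpoly"
  assumes "weakly_regular N (a @ [x] @ b)" "set (a @ [x] @ b) \<subseteq> PR N" "pos_homogeneous_list (a @ [x] @ b)"
  shows "weakly_regular N ([x] @ a @ b)"
  using assms
proof (induction a arbitrary: b rule: rev_induct)
  case Nil then show ?case by simp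
next
  case (snoc y a)
  have "weakly_regular N (a @ [x, y] @ b)"
    by (rule weakly_regular_swap) (use snoc.prems in simp_all)
  then have "weakly_regular N (a @ [x] @ (y # b))" by simp
  then have "weakly_regular N ([x] @ a @ (y # b))"
    by (rule snoc.IH) (use snoc.prems in \<open>auto simp: pos_homogeneous_list_def\<close>)
  then show ?case by simp
qed

lemma weakly_regular_snoc: "weakly_regular N (L @ [x]) \<longleftrightarrow> weakly_regular N L \<and> nonzerodivisor N (gen_ideal N L) x"
proof -
  have "weakly_regular N (L @ [x]) \<longleftrightarrow> (\<forall>i<Suc (length L). nonzerodivisor N (gen_ideal N (take i (L @ [x]))) ((L @ [x]) ! i))"
    by (simp add: weakly_regular_def)
  also have "\<dots> \<longleftrightarrow> (\<forall>i<length L. nonzerodivisor N (gen_ideal N (take i (L @ [x]))) ((L @ [x]) ! i)) \<and>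
      nonzerodivisor N (gen_ideal N (take (length L) (L @ [x]))) ((L @ [x]) ! length L)"
    by (simp add: less_Suc_eq conj_commute all_conj_distrib)
  also have "\<dots> \<longleftrightarrow> weakly_regular N L \<and> nonzerodivisor N (gen_ideal N L) x"
    by (simp add: weakly_regular_def nth_append)
  finally show ?thesis .
qed

lemma weakly_regular_Cons_nth:
  assumes "weakly_regular N (x # L)" "i < length L"
  shows "nonzerodivisor N (gen_ideal N (x # take i L)) (L ! i)"
proof -
  have "Suc i < length (x # L)" using assms(2) by simp
  with assms(1) have "nonzerodivisor N (gen_ideal N (take (Suc i) (x # L))) ((x # L) ! Suc i)"
    unfolding weakly_regular_def by blast
  then show ?thesis by simp
qed

lemma nonzerodivisor_factor:
  assumes "nonzerodivisor N (gen_ideal N L) (z * w)" "z \<in> PR N"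
  shows "nonzerodivisor N (gen_ideal N L) w"
  unfolding nonzerodivisor_def
proof safe
  fix g assume g: "g \<in> PR N" "g * w \<in> gen_ideal N L"
  then have "g * (z * w) \<in> gen_ideal N L"
    using gen_ideal_mult[OF assms(2) g(2)] by (simp add: mult_ac)
  then show "g \<in> gen_ideal N L" using assms(1) g(1) unfolding nonzerodivisor_def by blast
qed

lemma nonzerodivisor_add_multiple:
  fixes q :: "'a::field mpoly"
  assumes q: "nonzerodivisor N (gen_ideal N A) q" and a: "a \<in> gen_ideal N A" and c: "c \<noteq> 0"
  shows "nonzerodivisor N (gen_ideal N A) (a + const c * q)"
  unfolding nonzerodivisor_def
proof safe
  fix f assume f: "f \<in> PR N" "f * (a + const c * q) \<in> gen_ideal N A"
  have "(const c * f) * q = f * (a + const c * q) - f * a" by (simp add: algebra_simps)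
  also have "\<dots> \<in> gen_ideal N A" using f a by (simp add: gen_ideal_diff gen_ideal_mult)
  finally have "const c * f \<in> gen_ideal N A" using q f(1) unfolding nonzerodivisor_def by (meson PR_mult PR_const)
  then have "const (inverse c) * (const c * f) \<in> gen_ideal N A" by (rule gen_ideal_mult[OF PR_const])
  then show "f \<in> gen_ideal N A" using c by (simp add: mult.assoc[symmetric] const_mult[symmetric])
qed

lemma weakly_regular_replace:
  fixes q :: "'a::field mpoly"
  assumes r: "weakly_regular N (A @ [q] @ B)"
    and x: "x = a + const c * q" and a: "a \<in> gen_ideal N A" and c: "c \<noteq> 0"
  shows "weakly_regular N (A @ [x] @ B)"
  unfolding weakly_regular_def
proof (intro allI impI)
  let ?L = "A @ [q] @ B" and ?L' = "A @ [x] @ B"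
  fix i assume i: "i < length ?L'"
  have H: "nonzerodivisor N (gen_ideal N (take i ?L)) (?L ! i)" if "i < length ?L" for i
    using r that unfolding weakly_regular_def by blast
  have "i < length A \<or> i = length A \<or> (\<exists>k. i = Suc (length A) + k)" by presburger
  then consider "i < length A" | "i = length A" | k where "i = Suc (length A) + k" by blast
  then show "nonzerodivisor N (gen_ideal N (take i ?L')) (?L' ! i)"
  proof cases
    case 1
    then show ?thesis using H[of i] by (simp add: nth_append)
  next
    case 2
    have "nonzerodivisor N (gen_ideal N A) q" using H[of "length A"] by (simp add: nth_append)
    then show ?thesis using nonzerodivisor_add_multiple[OF _ a c] 2 by (simp add: x nth_append)
  next
    case 3
    then have "take i ?L' = A @ [x] @ take k B" "take i ?L = A @ [q] @ take k B" "?L' ! i = ?L ! i"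
      "i < length ?L" using i by (simp_all add: nth_append)
    moreover have "gen_ideal N (A @ [x] @ take k B) = gen_ideal N (A @ [q] @ take k B)"
      by (rule gen_ideal_replace[OF gen_ideal_exchange[OF x a c]])
    ultimately show ?thesis using H[of i] by simp
  qed
qed

definition mon_subst :: "(nat \<Rightarrow> 'a::comm_ring_1 mpoly) \<Rightarrow> (nat \<Rightarrow>\<^sub>0 nat) \<Rightarrow> 'a mpoly" where
  "mon_subst \<sigma> m = (\<Prod>i\<in>Poly_Mapping.keys m. \<sigma> i ^ Poly_Mapping.lookup m i)"

lemma subst_eq_sum_mon_subst: "subst \<sigma> p = (\<Sum>m\<in>Poly_Mapping.keys p. const (Poly_Mapping.lookup p m) * mon_subst \<sigma> m)"
  by (simp add: subst_def mon_subst_def)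

lemma subst_superset:
  assumes "finite A" "Poly_Mapping.keys p \<subseteq> A"
  shows "subst \<sigma> p = (\<Sum>m\<in>A. const (Poly_Mapping.lookup p m) * mon_subst \<sigma> m)"
  unfolding subst_eq_sum_mon_subst by (rule sum.mono_neutral_left) (use assms in \<open>auto simp: in_keys_iff\<close>)

lemma mon_subst_superset:
  assumes "finite A" "Poly_Mapping.keys m \<subseteq> A"
  shows "mon_subst \<sigma> m = (\<Prod>i\<in>A. \<sigma> i ^ Poly_Mapping.lookup m i)"
  unfolding mon_subst_def by (rule prod.mono_neutral_left) (use assms in \<open>auto simp: in_keys_iff\<close>)

lemma mon_subst_add: "mon_subst \<sigma> (m + m') = mon_subst \<sigma> m * mon_subst \<sigma> m'"
proof -
  let ?A = "Poly_Mapping.keys m \<union> Poly_Mapping.keys m'"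
  have "mon_subst \<sigma> (m + m') = (\<Prod>i\<in>?A. \<sigma> i ^ Poly_Mapping.lookup (m + m') i)"
    by (rule mon_subst_superset) (auto simp: keys_add_nat)
  also have "\<dots> = (\<Prod>i\<in>?A. \<sigma> i ^ Poly_Mapping.lookup m i) * (\<Prod>i\<in>?A. \<sigma> i ^ Poly_Mapping.lookup m' i)"
    by (simp add: lookup_add power_add prod.distrib)
  also have "\<dots> = mon_subst \<sigma> m * mon_subst \<sigma> m'"
    by (simp add: mon_subst_superset[symmetric])
  finally show ?thesis .
qed

lemma mon_subst_0[simp]: "mon_subst \<sigma> 0 = 1" by (simp add: mon_subst_def)

lemma subst_0[simp]: "subst \<sigma> 0 = 0" by (simp add: subst_def)

lemma subst_add: "subst \<sigma> (p + q) = subst \<sigma> p + subst \<sigma> q"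
proof -
  let ?A = "Poly_Mapping.keys p \<union> Poly_Mapping.keys q"
  have "subst \<sigma> (p + q) = (\<Sum>m\<in>?A. const (Poly_Mapping.lookup (p + q) m) * mon_subst \<sigma> m)"
    by (rule subst_superset) (auto dest: subsetD[OF keys_add])
  also have "\<dots> = (\<Sum>m\<in>?A. const (Poly_Mapping.lookup p m) * mon_subst \<sigma> m) + (\<Sum>m\<in>?A. const (Poly_Mapping.lookup q m) * mon_subst \<sigma> m)"
    by (simp add: lookup_add const_add distrib_right sum.distrib)
  also have "\<dots> = subst \<sigma> p + subst \<sigma> q"
    by (simp add: subst_superset[symmetric])
  finally show ?thesis .
qed

lemma subst_sum: "subst \<sigma> (sum f A) = (\<Sum>x\<in>A. subst \<sigma> (f x))"
  by (induction A rule: infinite_finite_induct) (auto simp: subst_add)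

lemma subst_uminus: "subst \<sigma> (- p) = - subst \<sigma> p"
proof -
  have "subst \<sigma> p + subst \<sigma> (- p) = 0" using subst_add[of \<sigma> p "- p"] by simp
  then show ?thesis by (metis add.inverse_unique)
qed

lemma subst_diff: "subst \<sigma> (p - q) = subst \<sigma> p - subst \<sigma> q"
  by (simp only: diff_conv_add_uminus subst_add subst_uminus)

lemma subst_single: "subst \<sigma> (Poly_Mapping.single m c) = const c * mon_subst \<sigma> m"
  by (simp add: subst_eq_sum_mon_subst)

lemma subst_mult: "subst \<sigma> (p * q) = subst \<sigma> p * subst \<sigma> q"
proof -
  let ?P = "Poly_Mapping.keys p" and ?Q = "Poly_Mapping.keys q"
  let ?lp = "Poly_Mapping.lookup p" and ?lq = "Poly_Mapping.lookup q"
  have "p * q = (\<Sum>a\<in>?P. Poly_Mapping.single a (?lp a)) * (\<Sum>b\<in>?Q. Poly_Mapping.single b (?lq b))"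
    using arg_cong2[OF poly_mapping_expansion[of p] poly_mapping_expansion[of q], of "(*)"] .
  also have "\<dots> = (\<Sum>a\<in>?P. \<Sum>b\<in>?Q. Poly_Mapping.single (a + b) (?lp a * ?lq b))"
    by (simp add: sum_product mult_single)
  finally have pq: "p * q = \<dots>" .
  have "subst \<sigma> (p * q) = (\<Sum>a\<in>?P. \<Sum>b\<in>?Q. (const (?lp a) * mon_subst \<sigma> a) * (const (?lq b) * mon_subst \<sigma> b))"
    unfolding pq subst_sum subst_single
    by (intro sum.cong refl) (simp only: const_mult mon_subst_add mult_ac)
  also have "\<dots> = subst \<sigma> p * subst \<sigma> q"
    by (simp only: subst_eq_sum_mon_subst sum_product)
  finally show ?thesis .
qed

lemma subst_const[simp]: "subst \<sigma> (const c) = const c"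
  using subst_single[of \<sigma> 0 c] by (simp add: const_def[symmetric])

lemma subst_1[simp]: "subst \<sigma> 1 = 1"
  using subst_const[of \<sigma> 1] by simp

lemma subst_var[simp]: "subst \<sigma> (var i) = \<sigma> i"
  by (simp add: var_def subst_single mon_subst_def)

lemma subst_prod: "subst \<sigma> (prod f A) = (\<Prod>x\<in>A. subst \<sigma> (f x))"
  by (induction A rule: infinite_finite_induct) (auto simp: subst_mult)

lemma subst_power: "subst \<sigma> (p ^ k) = subst \<sigma> p ^ k"
  by (induction k) (auto simp: subst_mult)

lemma subst_mon_subst: "subst \<alpha> (mon_subst \<beta> m) = mon_subst (subst \<alpha> \<circ> \<beta>) m"
  by (simp add: mon_subst_def subst_prod subst_power)

lemma subst_comp: "subst \<alpha> (subst \<beta> p) = subst (subst \<alpha> \<circ> \<beta>) p"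
proof -
  have "subst \<alpha> (subst \<beta> p) = (\<Sum>m\<in>Poly_Mapping.keys p. subst \<alpha> (const (Poly_Mapping.lookup p m) * mon_subst \<beta> m))"
    by (simp only: subst_eq_sum_mon_subst[of \<beta> p] subst_sum)
  also have "\<dots> = (\<Sum>m\<in>Poly_Mapping.keys p. const (Poly_Mapping.lookup p m) * mon_subst (subst \<alpha> \<circ> \<beta>) m)"
    by (simp only: subst_mult subst_const subst_mon_subst)
  also have "\<dots> = subst (subst \<alpha> \<circ> \<beta>) p"
    by (simp only: subst_eq_sum_mon_subst[of "subst \<alpha> \<circ> \<beta>" p])
  finally show ?thesis .
qed

lemma var_power: "var i ^ k = (Poly_Mapping.single (Poly_Mapping.single i k) 1 :: 'a::comm_ring_1 mpoly)"
proof (induction k)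
  case (Suc k)
  have "var i ^ Suc k = Poly_Mapping.single (Poly_Mapping.single i k) 1 * (var i :: 'a mpoly)"
    by (simp add: Suc mult.commute)
  also have "\<dots> = Poly_Mapping.single (Poly_Mapping.single i k + Poly_Mapping.single i 1) 1"
    by (simp add: var_def mult_single)
  also have "\<dots> = Poly_Mapping.single (Poly_Mapping.single i (Suc k)) 1"
    by (simp only: single_add[symmetric] Suc_eq_plus1)
  finally show ?case .
qed simp

lemma prod_single1:
  "(\<Prod>x\<in>A. Poly_Mapping.single (f x) (1::'a::comm_ring_1)) = Poly_Mapping.single (sum f A) 1"
  by (induction A rule: infinite_finite_induct) (auto simp: mult_single)

lemma mon_subst_var: "mon_subst var m = (Poly_Mapping.single m 1 :: 'a::comm_ring_1 mpoly)"
proof -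
  have "mon_subst var m = (\<Prod>i\<in>Poly_Mapping.keys m. (Poly_Mapping.single (Poly_Mapping.single i (Poly_Mapping.lookup m i)) 1 :: 'a mpoly))"
    by (simp add: mon_subst_def var_power)
  also have "\<dots> = Poly_Mapping.single m 1"
    by (simp add: prod_single1 poly_mapping_expansion[of m, symmetric])
  finally show ?thesis .
qed

lemma subst_var_id: "subst var p = p"
proof -
  have "subst var p = (\<Sum>m\<in>Poly_Mapping.keys p. Poly_Mapping.single m (Poly_Mapping.lookup p m))"
    unfolding subst_eq_sum_mon_subst mon_subst_var by (simp only: single_const[symmetric])
  then show ?thesis by (simp only: poly_mapping_expansion[of p, symmetric])
qed

lemma subst_cong:
  assumes "p \<in> PR n" "\<And>i. i < n \<Longrightarrow> \<alpha> i = \<beta> i"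
  shows "subst \<alpha> p = subst \<beta> p"
proof -
  have "mon_subst \<alpha> m = mon_subst \<beta> m" if "m \<in> Poly_Mapping.keys p" for m
    unfolding mon_subst_def
  proof (intro prod.cong refl)
    fix i assume "i \<in> Poly_Mapping.keys m"
    then have "i < n" using assms(1) that by (auto simp: PR_def)
    then show "\<alpha> i ^ Poly_Mapping.lookup m i = \<beta> i ^ Poly_Mapping.lookup m i" using assms(2) by simp
  qed
  then show ?thesis unfolding subst_eq_sum_mon_subst by (intro sum.cong) auto
qed

lemma PR_mon_subst: "Poly_Mapping.keys m \<subseteq> {..<N} \<Longrightarrow> (\<And>i. i < N \<Longrightarrow> \<sigma> i \<in> PR n) \<Longrightarrow> mon_subst \<sigma> m \<in> PR n"
  unfolding mon_subst_def by (auto intro!: PR_prod PR_power)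

lemma PR_subst:
  assumes "p \<in> PR N" "\<And>i. i < N \<Longrightarrow> \<sigma> i \<in> PR n"
  shows "subst \<sigma> p \<in> PR n"
  unfolding subst_eq_sum_mon_subst
proof (rule PR_sum, rule PR_mult[OF PR_const PR_mon_subst])
  fix m assume "m \<in> Poly_Mapping.keys p"
  then show "Poly_Mapping.keys m \<subseteq> {..<N}" using assms(1) by (auto simp: PR_def)
qed (use assms(2) in auto)

lemma homogeneous_mon_subst:
  assumes "\<And>i. i \<in> Poly_Mapping.keys m \<Longrightarrow> homogeneous 1 (\<sigma> i)"
  shows "homogeneous (tdeg m) (mon_subst \<sigma> m)"
  unfolding mon_subst_def tdeg_def
proof (rule homogeneous_prod)
  fix i assume "i \<in> Poly_Mapping.keys m"
  then show "homogeneous (Poly_Mapping.lookup m i) (\<sigma> i ^ Poly_Mapping.lookup m i)"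
    using homogeneous_power[OF assms, of i "Poly_Mapping.lookup m i"] by simp
qed

lemma homogeneous_subst:
  assumes "p \<in> Hom N d" "\<And>i. i < N \<Longrightarrow> \<sigma> i \<in> Hom n 1"
  shows "subst \<sigma> p \<in> Hom n d"
proof -
  have "homogeneous d (subst \<sigma> p)"
    unfolding subst_eq_sum_mon_subst
  proof (intro homogeneous_sum homogeneous_const_mult)
    fix m assume m: "m \<in> Poly_Mapping.keys p"
    then have "tdeg m = d" "Poly_Mapping.keys m \<subseteq> {..<N}" using assms(1) by (auto simp: Hom_iff homogeneous_def PR_def)
    then show "homogeneous d (mon_subst \<sigma> m)"
      using homogeneous_mon_subst[of m \<sigma>] assms(2) by (auto simp: Hom_iff)
  qed
  moreover have "subst \<sigma> p \<in> PR n"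
    by (rule PR_subst) (use assms in \<open>auto simp: Hom_iff\<close>)
  ultimately show ?thesis by (simp add: Hom_iff)
qed

lemma mult_diff_mem_gen_ideal:
  assumes "a \<in> PR N" "d \<in> PR N" "a - b \<in> gen_ideal N gs" "c - d \<in> gen_ideal N gs"
  shows "a * c - b * d \<in> gen_ideal N gs"
proof -
  have "a * c - b * d = a * (c - d) + d * (a - b)" by (simp add: algebra_simps)
  then show ?thesis using assms by (simp add: gen_ideal_add gen_ideal_mult)
qed

lemma power_diff_mem_gen_ideal:
  assumes "a \<in> PR N" "b \<in> PR N" "a - b \<in> gen_ideal N gs"
  shows "a ^ k - b ^ k \<in> gen_ideal N gs"
proof (induction k)
  case (Suc k)
  have "a * a ^ k - b * b ^ k \<in> gen_ideal N gs"
    by (rule mult_diff_mem_gen_ideal[OF assms(1) PR_power[OF assms(2)] assms(3) Suc])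
  then show ?case by simp
qed simp

lemma prod_diff_mem_gen_ideal:
  assumes P: "\<And>x. x \<in> A \<Longrightarrow> f x \<in> PR N \<and> g x \<in> PR N \<and> f x - g x \<in> gen_ideal N gs"
  shows "prod f A - prod g A \<in> gen_ideal N gs"
  using P
proof (induction A rule: infinite_finite_induct)
  case (insert x F)
  then show ?case by (auto intro!: mult_diff_mem_gen_ideal PR_prod)
qed auto

lemma subst_diff_mem_gen_ideal:
  assumes p: "p \<in> PR N"
    and ab: "\<And>i. i < N \<Longrightarrow> \<alpha> i \<in> PR N \<and> \<beta> i \<in> PR N \<and> \<alpha> i - \<beta> i \<in> gen_ideal N gs"
  shows "subst \<alpha> p - subst \<beta> p \<in> gen_ideal N gs"
proof -
  have "mon_subst \<alpha> m - mon_subst \<beta> m \<in> gen_ideal N gs" if "m \<in> Poly_Mapping.keys p" for m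
    unfolding mon_subst_def
  proof (rule prod_diff_mem_gen_ideal)
    fix i assume "i \<in> Poly_Mapping.keys m"
    then have "i < N" using p that by (auto simp: PR_def)
    then show "\<alpha> i ^ Poly_Mapping.lookup m i \<in> PR N \<and> \<beta> i ^ Poly_Mapping.lookup m i \<in> PR N \<and>
      \<alpha> i ^ Poly_Mapping.lookup m i - \<beta> i ^ Poly_Mapping.lookup m i \<in> gen_ideal N gs"
      using ab[of i] by (auto intro!: power_diff_mem_gen_ideal PR_power)
  qed
  then have "(\<Sum>m\<in>Poly_Mapping.keys p. const (Poly_Mapping.lookup p m) * (mon_subst \<alpha> m - mon_subst \<beta> m)) \<in> gen_ideal N gs"
    by (intro gen_ideal_sum gen_ideal_mult) auto
  then show ?thesis
    by (simp add: subst_eq_sum_mon_subst right_diff_distrib sum_subtractf)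
qed

lemma gen_ideal_subst:
  assumes f: "f \<in> gen_ideal N gs" and s: "\<And>i. i < N \<Longrightarrow> \<sigma> i \<in> PR n"
  shows "subst \<sigma> f \<in> gen_ideal n (map (subst \<sigma>) gs)"
proof -
  obtain c where c: "\<forall>i<length gs. c i \<in> PR N" "f = (\<Sum>i<length gs. c i * gs ! i)"
    using f unfolding gen_ideal_def by blast
  have "subst \<sigma> f = (\<Sum>i<length gs. subst \<sigma> (c i) * map (subst \<sigma>) gs ! i)"
    by (simp add: c subst_sum subst_mult)
  then show ?thesis unfolding gen_ideal_def using c(1) PR_subst[OF _ s]
    by (auto intro!: exI[of _ "\<lambda>i. subst \<sigma> (c i)"])
qed

section \<open>Elimination of a variable by a linear form\<close>

lemma tdeg_eq_1D:
  assumes "tdeg m = 1"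
  shows "\<exists>i. m = Poly_Mapping.single i 1"
proof -
  have ne: "Poly_Mapping.keys m \<noteq> {}" using assms by (auto simp: tdeg_def)
  then obtain i where i: "i \<in> Poly_Mapping.keys m" by blast
  have "1 = Poly_Mapping.lookup m i + (\<Sum>j\<in>Poly_Mapping.keys m - {i}. Poly_Mapping.lookup m j)"
    using assms i unfolding tdeg_def by (simp add: sum.remove)
  moreover have "Poly_Mapping.lookup m i \<ge> 1" using i by (simp add: in_keys_iff)
  ultimately have li: "Poly_Mapping.lookup m i = 1" and rest: "(\<Sum>j\<in>Poly_Mapping.keys m - {i}. Poly_Mapping.lookup m j) = 0"
    by linarith+
  have "Poly_Mapping.keys m - {i} = {}"
  proof (rule ccontr)
    assume "Poly_Mapping.keys m - {i} \<noteq> {}"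
    then obtain j where "j \<in> Poly_Mapping.keys m - {i}" by blast
    then have j: "j \<in> Poly_Mapping.keys m" "j \<noteq> i" by auto
    have "\<forall>x\<in>Poly_Mapping.keys m - {i}. Poly_Mapping.lookup m x = 0"
      using rest by (subst (asm) sum_eq_0_iff) auto
    then have "Poly_Mapping.lookup m j = 0" using j by blast
    then show False using j(1) by (simp add: in_keys_iff)
  qed
  then have "Poly_Mapping.keys m = {i}" using i by blast
  have "m = (\<Sum>j\<in>Poly_Mapping.keys m. Poly_Mapping.single j (Poly_Mapping.lookup m j))" by (rule poly_mapping_expansion)
  also have "\<dots> = Poly_Mapping.single i 1" using \<open>Poly_Mapping.keys m = {i}\<close> li by simp
  finally show ?thesis ..
qed

lemma homogeneous_var_Suc: "homogeneous (Suc 0) (var i)"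
  using homogeneous_var[of i] by simp

definition coef :: "'a::comm_ring_1 mpoly \<Rightarrow> nat \<Rightarrow> 'a" where
  "coef z i = Poly_Mapping.lookup z (Poly_Mapping.single i 1)"

lemma var_const: "Poly_Mapping.single (Poly_Mapping.single i 1) c = const c * var i"
  unfolding var_def by (rule single_const)

lemma linear_form_expansion:
  assumes "z \<in> Hom N 1"
  shows "z = (\<Sum>i<N. const (coef z i) * var i)"
proof -
  let ?A = "(\<lambda>i. Poly_Mapping.single i (1::nat)) ` {..<N}"
  have "Poly_Mapping.keys z \<subseteq> ?A"
  proof
    fix m assume m: "m \<in> Poly_Mapping.keys z"
    then have "tdeg m = 1" "Poly_Mapping.keys m \<subseteq> {..<N}" using assms by (auto simp: Hom_iff homogeneous_def PR_def)
    then obtain i where "m = Poly_Mapping.single i 1" using tdeg_eq_1D by blast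
    moreover have "i < N" using \<open>Poly_Mapping.keys m \<subseteq> {..<N}\<close> calculation by simp
    ultimately show "m \<in> ?A" by blast
  qed
  then have "z = (\<Sum>m\<in>?A. Poly_Mapping.single m (Poly_Mapping.lookup z m))"
    by (rule poly_mapping_expansion_superset[rotated]) simp
  also have "\<dots> = (\<Sum>i<N. Poly_Mapping.single (Poly_Mapping.single i 1) (coef z i))"
  proof -
    have inj: "inj_on (\<lambda>i. Poly_Mapping.single i (1::nat)) {..<N}"
      unfolding inj_on_def
    proof (intro ballI impI)
      fix i j assume "Poly_Mapping.single i (1::nat) = Poly_Mapping.single j 1"
      then have "Poly_Mapping.lookup (Poly_Mapping.single i (1::nat)) i = Poly_Mapping.lookup (Poly_Mapping.single j 1) i" by simp
      then show "i = j" by (auto simp: Poly_Mapping.lookup_single when_def split: if_splits)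
    qed
    show ?thesis unfolding sum.reindex[OF inj] by (simp add: coef_def)
  qed
  also have "\<dots> = (\<Sum>i<N. const (coef z i) * var i)" by (simp only: var_const)
  finally show ?thesis .
qed

lemma linear_form_coef_nonzero:
  assumes "z \<in> Hom N 1" "z \<noteq> 0"
  obtains k where "k < N" "coef z k \<noteq> 0"
proof -
  have "\<not> (\<forall>k<N. coef z k = 0)"
  proof
    assume "\<forall>k<N. coef z k = 0"
    then have "z = 0" using linear_form_expansion[OF assms(1)] by simp
    with assms(2) show False ..
  qed
  with that show thesis by blast
qed

definition skip :: "nat \<Rightarrow> nat \<Rightarrow> nat" where
  "skip k j = (if j < k then j else Suc j)"

lemma sum_split_skip:
  assumes "k < Suc n"
  shows "(\<Sum>i<Suc n. f i) = f k + (\<Sum>j<n. f (skip k j))"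
proof -
  have bij: "bij_betw (skip k) {..<n} ({..<Suc n} - {k})"
    unfolding bij_betw_def
  proof
    show "inj_on (skip k) {..<n}" by (auto simp: inj_on_def skip_def split: if_splits)
    show "skip k ` {..<n} = {..<Suc n} - {k}"
    proof
      show "skip k ` {..<n} \<subseteq> {..<Suc n} - {k}" by (auto simp: skip_def)
      show "{..<Suc n} - {k} \<subseteq> skip k ` {..<n}"
      proof
        fix i assume i: "i \<in> {..<Suc n} - {k}"
        show "i \<in> skip k ` {..<n}"
        proof (cases "i < k")
          case True then show ?thesis using i assms by (intro image_eqI[of _ _ i]) (auto simp: skip_def)
        next
          case False then show ?thesis using i by (intro image_eqI[of _ _ "i - 1"]) (auto simp: skip_def)
        qed
      qed
    qed
  qed
  have "(\<Sum>i<Suc n. f i) = f k + (\<Sum>i\<in>{..<Suc n} - {k}. f i)"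
    using assms by (intro sum.remove) auto
  also have "(\<Sum>i\<in>{..<Suc n} - {k}. f i) = (\<Sum>j<n. f (skip k j))"
    using sum.reindex_bij_betw[OF bij, of f] by simp
  finally show ?thesis .
qed

definition skip_subst :: "nat \<Rightarrow> nat \<Rightarrow> 'a::comm_ring_1 mpoly" where
  "skip_subst k j = var (skip k j)"

text \<open>For \<open>z = \<Sum>i. a\<^sub>i x\<^sub>i\<close> with \<open>a\<^sub>k \<noteq> 0\<close>, \<open>elim_subst z n k\<close> maps \<open>x\<^sub>k\<close> to
  \<open>-(\<Sum>i\<noteq>k. a\<^sub>i x\<^sub>i) / a\<^sub>k\<close> and renumbers the other variables to \<open>x\<^sub>0, \<dots>, x\<^sub>n\<^sub>-\<^sub>1\<close>;
  \<open>skip_subst k\<close> is the inverse renumbering.\<close>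

definition elim_subst :: "'a::field mpoly \<Rightarrow> nat \<Rightarrow> nat \<Rightarrow> nat \<Rightarrow> 'a mpoly" where
  "elim_subst z n k i = (if i = k then - (\<Sum>j<n. const (coef z (skip k j) / coef z k) * var j)
     else if i < k then var i else var (i - 1))"

locale linear_elimination =
  fixes z :: "'a::field mpoly" and n k :: nat
  assumes z: "z \<in> Hom (Suc n) 1" and k: "k < Suc n" and ak: "coef z k \<noteq> 0"
begin

abbreviation "\<sigma> \<equiv> elim_subst z n k"

abbreviation "\<tau> \<equiv> (skip_subst k :: nat \<Rightarrow> 'a mpoly)"

lemma elim_subst_Hom: "i < Suc n \<Longrightarrow> \<sigma> i \<in> Hom n 1"
proof -
  assume i: "i < Suc n"
  have v: "j < n \<Longrightarrow> var j \<in> Hom n 1" for j unfolding Hom_iff using PR_var homogeneous_var by blast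
  have s: "(\<Sum>j<n. const (coef z (skip k j) / coef z k) * var j) \<in> Hom n 1"
    by (auto simp: Hom_iff intro!: PR_sum PR_mult PR_var homogeneous_sum homogeneous_const_mult homogeneous_var_Suc)
  show ?thesis
  proof (cases "i = k")
    case True then show ?thesis using s by (simp add: elim_subst_def Hom_iff PR_uminus homogeneous_uminus)
  next
    case False
    then have "\<sigma> i = var (if i < k then i else i - 1)" "(if i < k then i else i - 1) < n"
      using i k by (auto simp: elim_subst_def)
    then show ?thesis using v by metis
  qed
qed

lemma elim_subst_PR: "i < Suc n \<Longrightarrow> \<sigma> i \<in> PR n"
  using elim_subst_Hom by (simp add: Hom_iff)

lemma skip_subst_PR: "j < n \<Longrightarrow> \<tau> j \<in> PR (Suc n)"
  by (auto simp: skip_subst_def skip_def intro!: PR_var)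

lemma elim_subst_skip_subst: "j < n \<Longrightarrow> subst \<sigma> (\<tau> j) = var j"
  by (auto simp: skip_subst_def skip_def elim_subst_def)

lemma elim_subst_skip_subst_id: "g \<in> PR n \<Longrightarrow> subst \<sigma> (subst \<tau> g) = g"
proof -
  assume g: "g \<in> PR n"
  have "subst \<sigma> (subst \<tau> g) = subst (subst \<sigma> \<circ> \<tau>) g" by (rule subst_comp)
  also have "\<dots> = subst var g" by (rule subst_cong[OF g]) (simp add: elim_subst_skip_subst)
  finally show ?thesis by (simp add: subst_var_id)
qed

lemma z_split: "z = const (coef z k) * var k + (\<Sum>j<n. const (coef z (skip k j)) * var (skip k j))"
proof -
  have "z = (\<Sum>i<Suc n. const (coef z i) * var i)" by (rule linear_form_expansion[OF z])
  also have "\<dots> = const (coef z k) * var k + (\<Sum>j<n. const (coef z (skip k j)) * var (skip k j))"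
    by (rule sum_split_skip[OF k])
  finally show ?thesis .
qed

lemma elim_subst_z: "subst \<sigma> z = 0"
proof -
  have "subst \<sigma> z = subst \<sigma> (const (coef z k) * var k + (\<Sum>j<n. const (coef z (skip k j)) * var (skip k j)))"
    using arg_cong[OF z_split, of "subst \<sigma>"] .
  also have "\<dots> = const (coef z k) * \<sigma> k + (\<Sum>j<n. const (coef z (skip k j)) * \<sigma> (skip k j))"
    by (simp only: subst_add subst_sum subst_mult subst_const subst_var)
  also have "(\<Sum>j<n. const (coef z (skip k j)) * \<sigma> (skip k j)) = (\<Sum>j<n. const (coef z (skip k j)) * var j)"
    by (rule sum.cong) (auto simp: elim_subst_def skip_def)
  also have "const (coef z k) * \<sigma> k = - (\<Sum>j<n. const (coef z k) * const (coef z (skip k j) / coef z k) * var j)"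
    by (simp add: elim_subst_def sum_distrib_left mult.assoc)
  also have "(\<Sum>j<n. const (coef z k) * const (coef z (skip k j) / coef z k) * var j) = (\<Sum>j<n. const (coef z (skip k j)) * var j)"
    using ak by (intro sum.cong refl) (simp add: const_mult[symmetric])
  finally show ?thesis by simp
qed

lemma skip_subst_elim_subst: "i < Suc n \<Longrightarrow> subst \<tau> (\<sigma> i) - var i \<in> gen_ideal (Suc n) [z]"
proof -
  assume i: "i < Suc n"
  show ?thesis
  proof (cases "i = k")
    case False
    have "subst \<tau> (\<sigma> i) = var i" using False i by (auto simp: elim_subst_def skip_subst_def skip_def)
    then show ?thesis by simp
  next
    case True
    let ?S = "\<Sum>j<n. const (coef z (skip k j)) * var (skip k j)"
    have s1: "subst \<tau> (\<sigma> k) = - (\<Sum>j<n. const (coef z (skip k j) / coef z k) * var (skip k j))"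
      by (simp add: elim_subst_def subst_uminus subst_sum subst_mult skip_subst_def)
    have s2: "(\<Sum>j<n. const (coef z (skip k j) / coef z k) * var (skip k j)) = const (inverse (coef z k)) * ?S"
      by (simp add: sum_distrib_left const_mult divide_inverse mult_ac)
    have s3: "?S = z - const (coef z k) * var k"
      by (metis add_diff_cancel_left' z_split)
    have s4: "const (inverse (coef z k)) * (z - const (coef z k) * var k) = const (inverse (coef z k)) * z - var k"
      using ak by (simp add: right_diff_distrib mult.assoc[symmetric] const_mult[symmetric])
    have "subst \<tau> (\<sigma> k) - var k = const (- inverse (coef z k)) * z"
      unfolding s1 s2 s3 s4 by (simp add: const_uminus)
    moreover have "const (- inverse (coef z k)) * z \<in> gen_ideal (Suc n) [z]"
      by (rule gen_ideal_mult[OF PR_const gen_ideal_mem]) simp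
    ultimately show ?thesis using True by simp
  qed
qed

lemma skip_elim_congruent:
  assumes h: "h \<in> PR (Suc n)"
  shows "subst \<tau> (subst \<sigma> h) - h \<in> gen_ideal (Suc n) [z]"
proof -
  have "subst \<tau> (subst \<sigma> h) = subst (subst \<tau> \<circ> \<sigma>) h" by (rule subst_comp)
  moreover have "subst (subst \<tau> \<circ> \<sigma>) h - subst var h \<in> gen_ideal (Suc n) [z]"
  proof (rule subst_diff_mem_gen_ideal[OF h])
    fix i assume i: "i < Suc n"
    show "(subst \<tau> \<circ> \<sigma>) i \<in> PR (Suc n) \<and> var i \<in> PR (Suc n) \<and> (subst \<tau> \<circ> \<sigma>) i - var i \<in> gen_ideal (Suc n) [z]"
      using i skip_subst_elim_subst[OF i] by (auto intro!: PR_subst[OF elim_subst_PR] skip_subst_PR PR_var)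
  qed
  ultimately show ?thesis by (simp add: subst_var_id)
qed

lemma elim_subst_image: "subst \<sigma> ` PR (Suc n) = PR n"
proof
  show "subst \<sigma> ` PR (Suc n) \<subseteq> PR n" using PR_subst elim_subst_PR by blast
  show "PR n \<subseteq> subst \<sigma> ` PR (Suc n)"
  proof
    fix g :: "'a mpoly" assume g: "g \<in> PR n"
    have "subst \<tau> g \<in> PR (Suc n)" using g by (rule PR_subst) (rule skip_subst_PR)
    then show "g \<in> subst \<sigma> ` PR (Suc n)" using elim_subst_skip_subst_id[OF g] by (metis image_eqI)
  qed
qed

lemma elim_subst_mem_gen_ideal_iff:
  assumes G: "set G \<subseteq> PR (Suc n)" and f: "f \<in> PR (Suc n)"
  shows "subst \<sigma> f \<in> gen_ideal n (map (subst \<sigma>) G) \<longleftrightarrow> f \<in> gen_ideal (Suc n) (z # G)"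
proof
  assume "f \<in> gen_ideal (Suc n) (z # G)"
  then have "subst \<sigma> f \<in> gen_ideal n (map (subst \<sigma>) (z # G))"
    by (rule gen_ideal_subst) (rule elim_subst_PR)
  also have "gen_ideal n (map (subst \<sigma>) (z # G)) \<subseteq> gen_ideal n (map (subst \<sigma>) G)"
    by (rule gen_ideal_subset) (auto simp: elim_subst_z intro: gen_ideal_mem)
  finally show "subst \<sigma> f \<in> gen_ideal n (map (subst \<sigma>) G)" .
next
  assume "subst \<sigma> f \<in> gen_ideal n (map (subst \<sigma>) G)"
  then obtain d where d: "\<forall>i<length G. d i \<in> PR n" "subst \<sigma> f = (\<Sum>i<length G. d i * map (subst \<sigma>) G ! i)"
    unfolding gen_ideal_def by auto
  define s where "s = (\<Sum>i<length G. subst \<tau> (d i) * G ! i)"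
  have sP: "s \<in> gen_ideal (Suc n) (z # G)"
    unfolding s_def
    by (intro gen_ideal_sum gen_ideal_mult gen_ideal_mem PR_subst[OF _ skip_subst_PR]) (use d(1) in auto)
  have GP: "set (z # G) \<subseteq> PR (Suc n)" using G z by (simp add: Hom_iff)
  define h where "h = f - s"
  have hP: "h \<in> PR (Suc n)" unfolding h_def using f sP gen_ideal_PR[OF GP] by (blast intro: PR_diff)
  have "subst \<sigma> s = (\<Sum>i<length G. d i * map (subst \<sigma>) G ! i)"
    unfolding s_def using d(1) by (simp add: subst_sum subst_mult elim_subst_skip_subst_id)
  then have "subst \<sigma> h = 0" unfolding h_def by (simp add: subst_diff d(2))
  then have "- h \<in> gen_ideal (Suc n) [z]" using skip_elim_congruent[OF hP] by simp
  then have "h \<in> gen_ideal (Suc n) [z]" using gen_ideal_uminus by fastforce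
  also have "gen_ideal (Suc n) [z] \<subseteq> gen_ideal (Suc n) (z # G)" by (rule gen_ideal_mono) auto
  finally have "h + s \<in> gen_ideal (Suc n) (z # G)" using sP by (rule gen_ideal_add)
  then show "f \<in> gen_ideal (Suc n) (z # G)" by (simp add: h_def)
qed

lemma weakly_regular_elim_subst:
  assumes psP: "set ps \<subseteq> PR (Suc n)" and reg: "weakly_regular (Suc n) (z # ps)"
  shows "weakly_regular n (map (subst \<sigma>) ps)"
  unfolding weakly_regular_def nonzerodivisor_def
proof (intro allI impI ballI)
  fix i g assume i: "i < length (map (subst \<sigma>) ps)" and g: "g \<in> PR n"
    and gi: "g * map (subst \<sigma>) ps ! i \<in> gen_ideal n (take i (map (subst \<sigma>) ps))"
  let ?G = "take i ps"
  have GP: "set ?G \<subseteq> PR (Suc n)" using psP by (meson in_set_takeD subsetD subsetI)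
  have ip: "i < length ps" using i by simp
  have tg: "subst \<tau> g \<in> PR (Suc n)" using g by (rule PR_subst) (rule skip_subst_PR)
  have piP: "ps ! i \<in> PR (Suc n)" using psP ip by auto
  have "subst \<sigma> (subst \<tau> g * ps ! i) = g * map (subst \<sigma>) ps ! i"
    using ip by (simp add: subst_mult elim_subst_skip_subst_id[OF g])
  then have "subst \<tau> g * ps ! i \<in> gen_ideal (Suc n) (z # ?G)"
    using elim_subst_mem_gen_ideal_iff[OF GP PR_mult[OF tg piP]] gi by (simp add: take_map)
  then have "subst \<tau> g \<in> gen_ideal (Suc n) (z # ?G)"
    using weakly_regular_Cons_nth[OF reg ip] tg unfolding nonzerodivisor_def by blast
  then have "subst \<sigma> (subst \<tau> g) \<in> gen_ideal n (map (subst \<sigma>) ?G)"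
    using elim_subst_mem_gen_ideal_iff[OF GP tg] by simp
  then show "g \<in> gen_ideal n (take i (map (subst \<sigma>) ps))"
    using elim_subst_skip_subst_id[OF g] by (simp add: take_map)
qed

end

section \<open>Exchanging a quadric of a complete intersection\<close>

lemma sum_lessThan_last_nonzero:
  fixes f :: "nat \<Rightarrow> 'b::comm_monoid_add"
  shows "(\<Sum>i<m. f i) \<noteq> 0 \<Longrightarrow> \<exists>j<m. f j \<noteq> 0 \<and> (\<Sum>i<m. f i) = (\<Sum>i<j. f i) + f j"
proof (induction m)
  case (Suc m)
  show ?case
  proof (cases "f m = 0")
    case True
    with Suc obtain j where "j < m" "f j \<noteq> 0" "(\<Sum>i<m. f i) = (\<Sum>i<j. f i) + f j" by auto
    with True show ?thesis by (intro exI[of _ j]) auto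
  next
    case False
    then show ?thesis by (intro exI[of _ m]) auto
  qed
qed simp

lemma CI_quadric_exchange:
  fixes qs :: "'a::field mpoly list"
  assumes CI: "CI_quadric_presentation (Suc n) qs"
    and f: "f \<in> Hom (Suc n) 2" "f \<in> gen_ideal (Suc n) qs" "f \<noteq> 0"
  obtains ps where "length ps = n" "set ps \<subseteq> Hom (Suc n) 2"
    "weakly_regular (Suc n) (ps @ [f])" "gen_ideal (Suc n) (ps @ [f]) = gen_ideal (Suc n) qs"
proof -
  let ?N = "Suc n"
  have len: "length qs = ?N" and qsH: "set qs \<subseteq> Hom ?N 2" and reg: "weakly_regular ?N qs"
    using CI by (auto simp: CI_quadric_presentation_def regular_seq_iff)
  obtain b where b: "f = (\<Sum>i<length qs. const (b i) * qs ! i)"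
    using homogeneous_gen_ideal_scalar_coeffs[OF f(2) _ qsH] f(1) by (auto simp: Hom_iff)
  then obtain j where j: "j < length qs" "const (b j) * qs ! j \<noteq> 0"
      "f = (\<Sum>i<j. const (b i) * qs ! i) + const (b j) * qs ! j"
    using sum_lessThan_last_nonzero[of "\<lambda>i. const (b i) * qs ! i" "length qs"] f(3) by auto
  have bj: "b j \<noteq> 0" using j(2) by auto
  define A B where "A = take j qs" and "B = drop (Suc j) qs"
  have qs: "A @ [qs ! j] @ B = qs" using id_take_nth_drop[OF j(1)] by (simp add: A_def B_def)
  have a: "(\<Sum>i<j. const (b i) * qs ! i) \<in> gen_ideal ?N A"
    unfolding gen_ideal_def using j(1) by (auto simp: A_def intro!: exI[of _ "\<lambda>i. const (b i)"])
  have "weakly_regular ?N (A @ [f] @ B)"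
    using weakly_regular_replace[OF _ j(3) a bj] reg by (simp only: qs)
  moreover have H: "set (A @ [f] @ B) \<subseteq> Hom ?N 2"
    using qsH f(1) by (auto simp: A_def B_def dest: in_set_takeD in_set_dropD)
  moreover from H have "set (A @ [f] @ B) \<subseteq> PR ?N" by (auto simp: Hom_iff)
  moreover from H have "pos_homogeneous_list (A @ [f] @ B)"
    by (intro pos_homogeneous_list_linear_quadric) blast
  ultimately have "weakly_regular ?N ((A @ B) @ [f])" using weakly_regular_move_end by simp
  moreover have "gen_ideal ?N ((A @ B) @ [f]) = gen_ideal ?N qs"
  proof -
    have "gen_ideal ?N ((A @ B) @ [f]) = gen_ideal ?N (A @ [f] @ B)" by (rule gen_ideal_set_eq) auto
    also have "\<dots> = gen_ideal ?N qs"
      using gen_ideal_replace[OF gen_ideal_exchange[OF j(3) a bj]] by (simp only: qs)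
    finally show ?thesis .
  qed
  moreover have "length (A @ B) = n" using j(1) len by (simp add: A_def B_def)
  moreover have "set (A @ B) \<subseteq> Hom ?N 2" using qsH by (auto simp: A_def B_def dest: in_set_takeD in_set_dropD)
  ultimately show thesis using that by blast
qed

lemma colon_of_weakly_regular_product:
  assumes reg: "weakly_regular N (ps @ [z * w])"
    and P: "set ps \<subseteq> PR N" "z \<in> PR N" "w \<in> PR N"
  shows "{f \<in> PR N. f * w \<in> gen_ideal N (ps @ [z * w])} = gen_ideal N (ps @ [z])"
proof (intro equalityI subsetI)
  fix f assume "f \<in> {f \<in> PR N. f * w \<in> gen_ideal N (ps @ [z * w])}"
  then obtain a c where f: "f \<in> PR N" and ac: "f * w = a + c * (z * w)" "a \<in> gen_ideal N ps" "c \<in> PR N"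
    unfolding gen_ideal_snoc by blast
  have "nonzerodivisor N (gen_ideal N ps) w"
    using reg P(2) by (auto simp: weakly_regular_snoc intro: nonzerodivisor_factor)
  moreover have "(f - c * z) * w \<in> gen_ideal N ps" using ac by (simp add: algebra_simps)
  ultimately have "f - c * z \<in> gen_ideal N ps"
    using f ac(3) P(2) unfolding nonzerodivisor_def by (meson PR_diff PR_mult)
  then have "(f - c * z) + c * z \<in> gen_ideal N (ps @ [z])" using ac(3) by (rule gen_ideal_snoc_mem)
  then show "f \<in> gen_ideal N (ps @ [z])" by simp
next
  fix f assume f: "f \<in> gen_ideal N (ps @ [z])"
  then obtain a c where ac: "f = a + c * z" "a \<in> gen_ideal N ps" "c \<in> PR N"
    unfolding gen_ideal_snoc by blast
  have "w * a + c * (z * w) \<in> gen_ideal N (ps @ [z * w])"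
    using ac(3) by (rule gen_ideal_snoc_mem[OF gen_ideal_mult[OF P(3) ac(2)]])
  moreover have "f \<in> PR N" using f gen_ideal_PR[of "ps @ [z]" N] P(1,2) by auto
  ultimately show "f \<in> {f \<in> PR N. f * w \<in> gen_ideal N (ps @ [z * w])}"
    by (simp add: ac(1) algebra_simps)
qed

lemma gen_ideal_snoc_factor:
  assumes J: "gen_ideal N (ps @ [z * w]) = gen_ideal N qs" and w: "w \<in> PR N"
  shows "gen_ideal N (qs @ [z]) = gen_ideal N (ps @ [z])"
proof
  have "z * w \<in> gen_ideal N (ps @ [z])"
    using gen_ideal_mult[OF w gen_ideal_mem[of z]] by (simp add: mult.commute)
  then have "gen_ideal N qs \<subseteq> gen_ideal N (ps @ [z])"
    unfolding J[symmetric] by (intro gen_ideal_subset) (auto intro: gen_ideal_mem)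
  then show "gen_ideal N (qs @ [z]) \<subseteq> gen_ideal N (ps @ [z])"
    by (intro gen_ideal_subset) (use gen_ideal_mem[of _ qs N] in \<open>auto intro: gen_ideal_mem\<close>)
  have "gen_ideal N (ps @ [z * w]) \<subseteq> gen_ideal N (qs @ [z])"
    unfolding J by (rule gen_ideal_mono) auto
  then show "gen_ideal N (ps @ [z]) \<subseteq> gen_ideal N (qs @ [z])"
    by (intro gen_ideal_subset) (use gen_ideal_mem[of _ "ps @ [z * w]" N] in \<open>auto intro: gen_ideal_mem\<close>)
qed

lemma CI_quadric_presentation_quotient:
  fixes ps :: "'a::field mpoly list"
  assumes ps: "length ps = n" "set ps \<subseteq> Hom (Suc n) 2"
    and reg: "weakly_regular (Suc n) (ps @ [z])" and z: "z \<in> Hom (Suc n) 1" "z \<noteq> 0"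
  shows "\<exists>qs \<sigma>. CI_quadric_presentation n qs \<and> (\<forall>i<Suc n. \<sigma> i \<in> Hom n 1)
    \<and> subst \<sigma> ` PR (Suc n) = PR n
    \<and> {f \<in> PR (Suc n). subst \<sigma> f \<in> gen_ideal n qs} = gen_ideal (Suc n) (ps @ [z])"
proof -
  obtain k where k: "k < Suc n" "coef z k \<noteq> 0" using linear_form_coef_nonzero[OF z] .
  interpret linear_elimination z n k by unfold_locales (use z k in auto)
  have psP: "set ps \<subseteq> PR (Suc n)" using ps(2) by (auto simp: Hom_iff)
  have "weakly_regular (Suc n) (z # ps)"
    using weakly_regular_move_front[of "Suc n" ps z "[]"] reg psP z ps(2)
      pos_homogeneous_list_linear_quadric[of "ps @ [z]" "Suc n"] by (auto simp: Hom_iff)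
  then have "weakly_regular n (map (subst \<sigma>) ps)" by (rule weakly_regular_elim_subst[OF psP])
  moreover have H: "set (map (subst \<sigma>) ps) \<subseteq> Hom n 2"
    using ps(2) by (auto intro!: homogeneous_subst elim_subst_Hom)
  moreover have "gen_ideal n (map (subst \<sigma>) ps) \<noteq> PR n"
    by (rule gen_ideal_ne_PR, rule pos_homogeneous_list_linear_quadric) (use H in blast)
  ultimately have "CI_quadric_presentation n (map (subst \<sigma>) ps)"
    using ps(1) by (auto simp: CI_quadric_presentation_def regular_seq_iff Hom_iff)
  moreover have "{f \<in> PR (Suc n). subst \<sigma> f \<in> gen_ideal n (map (subst \<sigma>) ps)} = gen_ideal (Suc n) (ps @ [z])"
  proof -
    have "gen_ideal (Suc n) (z # ps) = gen_ideal (Suc n) (ps @ [z])" by (rule gen_ideal_set_eq) simp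
    moreover have "gen_ideal (Suc n) (ps @ [z]) \<subseteq> PR (Suc n)" using psP z by (intro gen_ideal_PR) (auto simp: Hom_iff)
    ultimately show ?thesis using elim_subst_mem_gen_ideal_iff[OF psP] by blast
  qed
  ultimately show ?thesis using elim_subst_Hom elim_subst_image by blast
qed

context vector_space

begin

lemma span_disjoint_subsets_zero:
  assumes D: "independent D" "finite D" and XY: "X \<subseteq> D" "Y \<subseteq> D" "X \<inter> Y = {}"
    and x: "x \<in> span X" "x \<in> span Y"
  shows "x = 0"
proof -
  have fX: "finite X" using finite_subset[OF XY(1) D(2)] .
  have fY: "finite Y" using finite_subset[OF XY(2) D(2)] .
  obtain a where a: "x = (\<Sum>v\<in>X. a v *s v)" using x(1) span_finite[OF fX] by auto
  obtain b where b: "x = (\<Sum>v\<in>Y. b v *s v)" using x(2) span_finite[OF fY] by auto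
  define c where "c v = (if v \<in> X then a v else - b v)" for v
  have "(\<Sum>v\<in>X \<union> Y. c v *s v) = (\<Sum>v\<in>X. c v *s v) + (\<Sum>v\<in>Y. c v *s v)"
    by (rule sum.union_disjoint) (use fX fY XY in auto)
  also have "(\<Sum>v\<in>X. c v *s v) = x" unfolding a by (rule sum.cong) (auto simp: c_def)
  also have "(\<Sum>v\<in>Y. c v *s v) = - x" unfolding b using XY(3)
    by (auto simp: c_def sum_negf[symmetric] intro!: sum.cong)
  finally have s0: "(\<Sum>v\<in>X \<union> Y. c v *s v) = 0" by simp
  have "\<forall>v\<in>X. a v = 0"
  proof
    fix v assume v: "v \<in> X"
    have "c v = 0" by (rule independentD[OF D(1) _ _ s0]) (use fX fY XY v in auto)
    then show "a v = 0" using v by (simp add: c_def)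
  qed
  then show ?thesis unfolding a by simp
qed

lemma independent_Un_span:
  assumes S: "independent S" "finite S" and T: "independent T" "finite T"
    and ST: "\<And>y. y \<in> span S \<Longrightarrow> y \<in> span T \<Longrightarrow> y = 0"
  shows "independent (S \<union> T)" "S \<inter> T = {}"
proof -
  show disj: "S \<inter> T = {}"
  proof (rule ccontr)
    assume "S \<inter> T \<noteq> {}"
    then obtain v where v: "v \<in> S" "v \<in> T" by blast
    then have "v = 0" using ST span_base by blast
    then show False using v S(1) dependent_zero by blast
  qed
  show "independent (S \<union> T)"
  proof (rule independent_if_scalars_zero)
    show "finite (S \<union> T)" using S T by simp
    fix f x assume s0: "(\<Sum>x\<in>S \<union> T. f x *s x) = 0" and x: "x \<in> S \<union> T"
    have "(\<Sum>x\<in>S \<union> T. f x *s x) = (\<Sum>x\<in>S. f x *s x) + (\<Sum>x\<in>T. f x *s x)"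
      by (rule sum.union_disjoint) (use S T disj in auto)
    then have e: "(\<Sum>x\<in>S. f x *s x) = - (\<Sum>x\<in>T. f x *s x)" using s0 by (simp add: eq_neg_iff_add_eq_0)
    have "(\<Sum>x\<in>S. f x *s x) \<in> span S" by (intro span_sum span_scale span_base)
    moreover have "(\<Sum>x\<in>S. f x *s x) \<in> span T" unfolding e by (intro span_neg span_sum span_scale span_base)
    ultimately have s1: "(\<Sum>x\<in>S. f x *s x) = 0" using ST by blast
    then have s2: "(\<Sum>x\<in>T. f x *s x) = 0" using e by simp
    show "f x = 0"
    proof (cases "x \<in> S")
      case True then show ?thesis using independentD[OF S(1) S(2) subset_refl s1] by simp
    next
      case False then show ?thesis using x independentD[OF T(1) T(2) subset_refl s2] by simp
    qed
  qed
qed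

lemma image_span_complement_inter_zero:
  assumes h: "module_hom scale scale h" and D: "independent D" "finite D" "C \<subseteq> D"
    and hC: "\<And>g. g \<in> span D \<Longrightarrow> h g \<in> W \<Longrightarrow> g \<in> span C"
    and y: "y \<in> W" "y \<in> span (h ` (D - C))"
  shows "y = 0"
proof -
  interpret H: module_hom scale scale h by (rule h)
  obtain g where g: "g \<in> span (D - C)" "y = h g" using y(2) H.span_image by auto
  have "g \<in> span D" using g(1) span_mono[of "D - C" D] by blast
  then have "g \<in> span C" using hC y(1) g(2) by blast
  then have "g = 0" using span_disjoint_subsets_zero[OF D(1,2) D(3) _ _ _ g(1)] by auto
  then show "y = 0" using g(2) by simp
qed

lemma image_add_mem_span_complement:
  assumes h: "module_hom scale scale h" and CD: "C \<subseteq> D"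
    and hC: "\<And>g. g \<in> span C \<Longrightarrow> h g \<in> span E"
    and g: "g \<in> span D" and j: "j \<in> span E"
  shows "h g + j \<in> span (E \<union> h ` (D - C))"
proof -
  interpret H: module_hom scale scale h by (rule h)
  have "C \<union> (D - C) = D" using CD by blast
  then have "g \<in> span (C \<union> (D - C))" using g by simp
  then obtain g1 g2 where g12: "g = g1 + g2" "g1 \<in> span C" "g2 \<in> span (D - C)"
    unfolding span_Un by blast
  have "h g1 + j \<in> span E" using hC[OF g12(2)] j by (rule span_add)
  then have "h g1 + j \<in> span (E \<union> h ` (D - C))" using span_mono[of E] by blast
  moreover have "h g2 \<in> span (E \<union> h ` (D - C))"
    using g12(3) H.span_image span_mono[of "h ` (D - C)" "E \<union> h ` (D - C)"] by blast
  ultimately have "(h g1 + j) + h g2 \<in> span (E \<union> h ` (D - C))" by (rule span_add)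
  then show ?thesis using g12(1) by (simp add: H.add ac_simps)
qed

text \<open>A basis of \<open>A\<close> consists of a basis of \<open>Js\<close> and the images under \<open>h\<close> of the
  vectors of a basis of \<open>T\<close> that complete a basis of \<open>B\<close>.\<close>

lemma dim_image_plus_subspace:
  assumes sT: "subspace T" and sJ: "subspace Js" and sB: "subspace B" and BT: "B \<subseteq> T"
    and fT: "finite FT" "T \<subseteq> span FT" and fJ: "finite FJ" "Js \<subseteq> span FJ"
    and h: "module_hom scale scale h" "inj h"
    and hB: "\<And>g. g \<in> T \<Longrightarrow> h g \<in> Js \<longleftrightarrow> g \<in> B"
    and A: "A = {h g + j | g j. g \<in> T \<and> j \<in> Js}"
  shows "dim A + dim B = dim T + dim Js"
proof -
  interpret H: module_hom scale scale h by (rule h(1))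
  obtain CB where CB: "CB \<subseteq> B" "independent CB" "B \<subseteq> span CB" "card CB = dim B"
    by (rule basis_exists)
  obtain DT where DT: "CB \<subseteq> DT" "DT \<subseteq> T" "independent DT" "T \<subseteq> span DT"
    using maximal_independent_subset_extend[of CB T] CB BT by blast
  obtain E where E: "E \<subseteq> Js" "independent E" "Js \<subseteq> span E" "card E = dim Js"
    by (rule basis_exists)
  have finDT: "finite DT" using independent_span_bound[OF fT(1) DT(3)] DT(2) fT(2) by blast
  have finE: "finite E" using independent_span_bound[OF fJ(1) E(2)] E(1) fJ(2) by blast
  have spanT: "span DT = T" using span_minimal[OF DT(2) sT] DT(4) by blast
  have spanB: "span CB = B" using span_minimal[OF CB(1) sB] CB(3) by blast
  have spanE: "span E = Js" using span_minimal[OF E(1) sJ] E(3) by blast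
  let ?H = "h ` (DT - CB)"
  have indH: "independent ?H"
    by (rule H.independent_injective_image) (use DT(3) h(2) independent_mono in \<open>auto intro: inj_on_subset\<close>)
  have "y = 0" if "y \<in> span E" "y \<in> span ?H" for y
    by (rule image_span_complement_inter_zero[OF h(1) DT(3) finDT DT(1), of Js])
      (use that hB in \<open>auto simp: spanE spanT spanB\<close>)
  then have indF: "independent (E \<union> ?H)" and disjF: "E \<inter> ?H = {}"
    using independent_Un_span[OF E(2) finE indH] finDT by auto
  have FA: "E \<union> ?H \<subseteq> A"
  proof
    fix x assume "x \<in> E \<union> ?H"
    then have "(\<exists>g. x = h g + 0 \<and> g \<in> T) \<or> x = h 0 + x \<and> x \<in> Js"
      using E(1) DT(2) by auto
    then show "x \<in> A" unfolding A using subspace_0[OF sT] subspace_0[OF sJ] by blast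
  qed
  have AF: "A \<subseteq> span (E \<union> ?H)"
  proof
    fix x assume "x \<in> A"
    then obtain g j where "x = h g + j" "g \<in> T" "j \<in> Js" unfolding A by blast
    then show "x \<in> span (E \<union> ?H)"
      using image_add_mem_span_complement[OF h(1) DT(1), of E g j] hB BT
      by (auto simp: spanT spanB spanE)
  qed
  have cardDT: "card DT = dim T" by (rule basis_card_eq_dim[OF DT(2,4,3)])
  have "dim A = card (E \<union> ?H)" using basis_card_eq_dim[OF FA AF indF] by simp
  also have "\<dots> = card E + card (DT - CB)"
    using finE finDT disjF h(2) by (simp add: card_Un_disjoint card_image inj_on_subset)
  also have "card (DT - CB) = card DT - card CB"
    using finDT DT(1) by (simp add: card_Diff_subset finite_subset)
  finally have "dim A = dim Js + (dim T - dim B)" using E(4) cardDT CB(4) by simp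
  moreover have "dim B \<le> dim T" using CB(4) cardDT card_mono[OF finDT DT(1)] by simp
  ultimately show ?thesis by simp
qed

end

section \<open>Graded dimensions\<close>

lemma vector_space_smul: "vector_space (smul :: 'a::field \<Rightarrow> 'a mpoly \<Rightarrow> 'a mpoly)"
  by unfold_locales (simp_all add: smul_def const_add const_mult distrib_left distrib_right mult.assoc)

interpretation mpoly_space: vector_space "smul :: 'a::field \<Rightarrow> 'a mpoly \<Rightarrow> 'a mpoly"
  by (rule vector_space_smul)

lemma subspace_Hom: "mpoly_space.subspace (Hom N d :: 'a::field mpoly set)"
  by (rule mpoly_space.subspaceI) (auto simp: Hom_iff smul_def PR_add PR_mult homogeneous_add homogeneous_const_mult)

lemma subspace_gen_ideal: "mpoly_space.subspace (gen_ideal N gs :: 'a::field mpoly set)"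
  by (rule mpoly_space.subspaceI) (auto simp: smul_def gen_ideal_add gen_ideal_mult)

lemma subspace_colon:
  assumes "mpoly_space.subspace (U :: 'a::field mpoly set)"
  shows "mpoly_space.subspace {g \<in> U. z * g \<in> gen_ideal N gs}"
proof (rule mpoly_space.subspaceI)
  show "0 \<in> {g \<in> U. z * g \<in> gen_ideal N gs}" using mpoly_space.subspace_0[OF assms] by simp
  fix x y assume "x \<in> {g \<in> U. z * g \<in> gen_ideal N gs}" "y \<in> {g \<in> U. z * g \<in> gen_ideal N gs}"
  then show "x + y \<in> {g \<in> U. z * g \<in> gen_ideal N gs}"
    using mpoly_space.subspace_add[OF assms] by (auto simp: distrib_left gen_ideal_add)
next
  fix c x assume x: "x \<in> {g \<in> U. z * g \<in> gen_ideal N gs}"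
  have e: "z * smul c x = const c * (z * x)" by (simp add: smul_def mult.left_commute)
  have a: "smul c x \<in> U" using x mpoly_space.subspace_scale[OF assms] by blast
  have b: "z * smul c x \<in> gen_ideal N gs" unfolding e using x gen_ideal_mult[OF PR_const] by blast
  show "smul c x \<in> {g \<in> U. z * g \<in> gen_ideal N gs}" using a b by blast
qed

definition monomials :: "nat \<Rightarrow> nat \<Rightarrow> (nat \<Rightarrow>\<^sub>0 nat) set" where
  "monomials N d = {m. Poly_Mapping.keys m \<subseteq> {..<N} \<and> tdeg m = d}"

lemma lookup_le_tdeg: "Poly_Mapping.lookup m i \<le> tdeg m"
proof (cases "i \<in> Poly_Mapping.keys m")
  case True then show ?thesis unfolding tdeg_def by (rule member_le_sum) auto
next
  case False then show ?thesis by (simp add: in_keys_iff)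
qed

lemma finite_monomials: "finite (monomials N d)"
proof -
  let ?f = "\<lambda>m::nat \<Rightarrow>\<^sub>0 nat. restrict (Poly_Mapping.lookup m) {..<N}"
  have "?f ` monomials N d \<subseteq> PiE {..<N} (\<lambda>_. {..d})"
    by (auto simp: monomials_def PiE_iff lookup_le_tdeg split: if_splits)
  then have "finite (?f ` monomials N d)" by (rule finite_subset) (simp add: finite_PiE)
  moreover have "inj_on ?f (monomials N d)"
  proof (rule inj_onI)
    fix m m' assume m: "m \<in> monomials N d" "m' \<in> monomials N d" and e: "?f m = ?f m'"
    show "m = m'"
    proof (rule poly_mapping_eqI)
      fix i show "Poly_Mapping.lookup m i = Poly_Mapping.lookup m' i"
      proof (cases "i < N")
        case True then show ?thesis using fun_cong[OF e, of i] by simp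
      next
        case False
        then have "i \<notin> Poly_Mapping.keys m" "i \<notin> Poly_Mapping.keys m'" using m by (auto simp: monomials_def)
        then show ?thesis by (simp add: in_keys_iff)
      qed
    qed
  qed
  ultimately show ?thesis by (rule finite_imageD)
qed

lemma Hom_subset_span_monomials: "Hom N d \<subseteq> mpoly_space.span ((\<lambda>m. Poly_Mapping.single m (1::'a::field)) ` monomials N d)"
proof
  fix p :: "'a mpoly" assume p: "p \<in> Hom N d"
  have "p = (\<Sum>m\<in>Poly_Mapping.keys p. Poly_Mapping.single m (Poly_Mapping.lookup p m))" by (rule poly_mapping_expansion)
  also have "\<dots> = (\<Sum>m\<in>Poly_Mapping.keys p. smul (Poly_Mapping.lookup p m) (Poly_Mapping.single m 1))"
    by (simp only: smul_def single_const[symmetric])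
  also have "\<dots> \<in> mpoly_space.span ((\<lambda>m. Poly_Mapping.single m (1::'a)) ` monomials N d)"
  proof (intro mpoly_space.span_sum mpoly_space.span_scale mpoly_space.span_base)
    fix m assume "m \<in> Poly_Mapping.keys p"
    then have "m \<in> monomials N d" using p by (auto simp: monomials_def Hom_iff PR_def homogeneous_def)
    then show "Poly_Mapping.single m 1 \<in> (\<lambda>m. Poly_Mapping.single m (1::'a)) ` monomials N d" by blast
  qed
  finally show "p \<in> mpoly_space.span ((\<lambda>m. Poly_Mapping.single m (1::'a)) ` monomials N d)" .
qed

lemma module_hom_mult_left: "module_hom smul smul (\<lambda>x. z * (x :: 'a::field mpoly))"
  unfolding module_hom_iff
  using vector_space_smul by (simp add: module_iff_vector_space smul_def distrib_left mult.left_commute)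

lemma inj_mult_left: "(z :: 'a::field mpoly) \<noteq> 0 \<Longrightarrow> inj (\<lambda>x. z * x)"
  by (auto simp: inj_def)

lemma gen_ideal_snoc_inter_Hom:
  assumes gs: "homogeneous_list gs" "set gs \<subseteq> PR N" and z: "z \<in> Hom N e"
  shows "gen_ideal N (gs @ [z]) \<inter> Hom N (t + e)
    = {z * g + j | g j. g \<in> Hom N t \<and> j \<in> gen_ideal N gs \<inter> Hom N (t + e)}"
proof (intro equalityI subsetI)
  fix f assume "f \<in> gen_ideal N (gs @ [z]) \<inter> Hom N (t + e)"
  then obtain a c where f: "f \<in> Hom N (t + e)" and ac: "f = a + c * z" "a \<in> gen_ideal N gs" "c \<in> PR N"
    unfolding gen_ideal_snoc by blast
  have ze: "homogeneous e z" using z by (simp add: Hom_iff)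
  have "f = hcomp (t + e) f" using f by (simp add: Hom_iff hcomp_homogeneous_same)
  also have "\<dots> = hcomp (t + e) a + hcomp t c * z"
    by (simp add: ac(1) hcomp_add hcomp_mult_homogeneous[OF ze])
  finally have "f = z * hcomp t c + hcomp (t + e) a" by (simp add: mult.commute add.commute)
  then show "f \<in> {z * g + j | g j. g \<in> Hom N t \<and> j \<in> gen_ideal N gs \<inter> Hom N (t + e)}"
    using ac(2,3) gen_ideal_hcomp[OF gs(1) ac(2)] gen_ideal_PR[OF gs(2)]
    by (blast intro: Hom_hcomp)
next
  fix f assume "f \<in> {z * g + j | g j. g \<in> Hom N t \<and> j \<in> gen_ideal N gs \<inter> Hom N (t + e)}"
  then obtain g j where gj: "f = j + g * z" "g \<in> Hom N t" "j \<in> gen_ideal N gs" "j \<in> Hom N (t + e)"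
    by (auto simp: mult.commute add.commute)
  have "g * z \<in> Hom N (t + e)" using gj(2) z by (simp add: Hom_iff PR_mult homogeneous_mult)
  then have "f \<in> Hom N (t + e)" using gj(1,4) by (simp add: Hom_iff PR_add homogeneous_add)
  moreover have "f \<in> gen_ideal N (gs @ [z])"
    unfolding gj(1) by (rule gen_ideal_snoc_mem) (use gj(2,3) in \<open>auto simp: Hom_iff\<close>)
  ultimately show "f \<in> gen_ideal N (gs @ [z]) \<inter> Hom N (t + e)" by blast
qed

lemma Kdim_colon_linear:
  fixes qs :: "'a::field mpoly list"
  assumes qs: "homogeneous_list qs" "set qs \<subseteq> PR N" and z: "z \<in> Hom N 1" "z \<noteq> 0"
    and colon: "{f \<in> PR N. f * w \<in> gen_ideal N qs} = gen_ideal N (qs @ [z])"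
  shows "Kdim N (gen_ideal N qs) w (Suc t) = Rdim N (gen_ideal N qs) t - Kdim N (gen_ideal N qs) z t"
proof -
  define J where "J = gen_ideal N qs"
  define Js where "Js = J \<inter> Hom N (Suc t)"
  define B where "B = {g \<in> Hom N t. z * g \<in> J}"
  have "{f \<in> Hom N (Suc t). f * w \<in> J} = gen_ideal N (qs @ [z]) \<inter> Hom N (Suc t)"
    using colon by (auto simp: J_def Hom_iff)
  also have "\<dots> = {z * g + j | g j. g \<in> Hom N t \<and> j \<in> Js}"
    using gen_ideal_snoc_inter_Hom[OF qs z(1), of t] by (simp add: Js_def J_def)
  finally have A: "{f \<in> Hom N (Suc t). f * w \<in> J} = \<dots>" .
  have hB: "z * g \<in> Js \<longleftrightarrow> g \<in> B" if g: "g \<in> Hom N t" for g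
  proof -
    have "z * g \<in> Hom N (Suc t)" using g z(1) homogeneous_mult[of 1 z t g] by (simp add: Hom_iff PR_mult)
    then show ?thesis using g by (auto simp: Js_def B_def)
  qed
  define M where "M d = (\<lambda>m. Poly_Mapping.single m (1::'a)) ` monomials N d" for d
  have M: "finite (M d)" "Hom N d \<subseteq> mpoly_space.span (M d)" for d
    by (simp_all add: M_def finite_monomials Hom_subset_span_monomials)
  have JsM: "Js \<subseteq> mpoly_space.span (M (Suc t))" using M(2) by (auto simp: Js_def)
  have sJ: "mpoly_space.subspace Js" unfolding Js_def J_def
    by (rule mpoly_space.subspace_inter[OF subspace_gen_ideal subspace_Hom])
  have sB: "mpoly_space.subspace B" unfolding B_def J_def by (rule subspace_colon[OF subspace_Hom])
  have BT: "B \<subseteq> Hom N t" by (auto simp: B_def)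
  have "mpoly_space.dim {f \<in> Hom N (Suc t). f * w \<in> J} + mpoly_space.dim B = mpoly_space.dim (Hom N t :: 'a mpoly set) + mpoly_space.dim Js"
    by (rule mpoly_space.dim_image_plus_subspace[OF subspace_Hom sJ sB BT M(1,2) M(1) JsM module_hom_mult_left
        inj_mult_left[OF z(2)] hB A])
  moreover have "{f \<in> Hom N t. f * z \<in> J} = B" by (auto simp: B_def mult.commute)
  ultimately show ?thesis
    unfolding J_def[symmetric] by (simp add: Kdim_def Rdim_def qdim_def kdim_def Js_def)
qed

theorem mainTheorem13:
  fixes n :: nat and qs :: "'a::field_char_0 mpoly list" and w z :: "'a mpoly"
  assumes "alg_closed_field TYPE('a)"
    and "CI_quadric_presentation (n + 1) qs"
    and "w \<in> Hom (n + 1) 1" and "w \<notin> gen_ideal (n + 1) qs"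
    and "z \<in> Hom (n + 1) 1" and "z \<notin> gen_ideal (n + 1) qs"
    and "z * w \<in> gen_ideal (n + 1) qs"
  shows "gen_ideal (n + 1) (qs @ [z]) = {f \<in> PR (n + 1). f * w \<in> gen_ideal (n + 1) qs}
    \<and> (\<exists>qs' \<sigma>. CI_quadric_presentation n qs'
          \<and> (\<forall>i<n + 1. \<sigma> i \<in> Hom n 1)
          \<and> subst \<sigma> ` PR (n + 1) = PR n
          \<and> {f \<in> PR (n + 1). subst \<sigma> f \<in> gen_ideal n qs'} = gen_ideal (n + 1) (qs @ [z]))
    \<and> (\<forall>s\<ge>1. Kdim (n + 1) (gen_ideal (n + 1) qs) w s
          = Rdim (n + 1) (gen_ideal (n + 1) qs) (s - 1) - Kdim (n + 1) (gen_ideal (n + 1) qs) z (s - 1))"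
proof -
  let ?N = "Suc n"
  have CI: "CI_quadric_presentation ?N qs" and w: "w \<in> Hom ?N 1" "w \<noteq> 0"
    and z: "z \<in> Hom ?N 1" "z \<noteq> 0" and zw: "z * w \<in> gen_ideal ?N qs"
    using assms(2-7) gen_ideal_0 by auto
  have qs: "set qs \<subseteq> Hom ?N 2" using CI by (simp add: CI_quadric_presentation_def)
  have "z * w \<in> Hom ?N 2" using z(1) w(1) homogeneous_mult[of 1 z 1 w] by (simp add: Hom_iff PR_mult numeral_2_eq_2)
  then obtain ps where ps: "length ps = n" "set ps \<subseteq> Hom ?N 2"
      and reg: "weakly_regular ?N (ps @ [z * w])" and J: "gen_ideal ?N (ps @ [z * w]) = gen_ideal ?N qs"
    using CI_quadric_exchange[OF CI _ zw] z(2) w(2) by auto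
  have psP: "set ps \<subseteq> PR ?N" and zP: "z \<in> PR ?N" and wP: "w \<in> PR ?N"
    using ps(2) z(1) w(1) by (auto simp: Hom_iff)
  have colon: "{f \<in> PR ?N. f * w \<in> gen_ideal ?N qs} = gen_ideal ?N (qs @ [z])"
    using colon_of_weakly_regular_product[OF reg psP zP wP] gen_ideal_snoc_factor[OF J wP] J by simp
  have "weakly_regular ?N (ps @ [z])"
    using reg nonzerodivisor_factor[of ?N ps w z] wP by (simp add: weakly_regular_snoc mult.commute)
  then have quotient: "\<exists>qs' \<sigma>. CI_quadric_presentation n qs' \<and> (\<forall>i<?N. \<sigma> i \<in> Hom n 1)
      \<and> subst \<sigma> ` PR ?N = PR n \<and> {f \<in> PR ?N. subst \<sigma> f \<in> gen_ideal n qs'} = gen_ideal ?N (qs @ [z])"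
    using CI_quadric_presentation_quotient[OF ps _ z] gen_ideal_snoc_factor[OF J wP] by simp
  have qsP: "set qs \<subseteq> PR ?N" using qs by (auto simp: Hom_iff)
  have "Kdim ?N (gen_ideal ?N qs) w (Suc t) = Rdim ?N (gen_ideal ?N qs) t - Kdim ?N (gen_ideal ?N qs) z t" for t
    by (rule Kdim_colon_linear[OF homogeneous_listI[OF qs] qsP z colon])
  then have "\<forall>s\<ge>1. Kdim ?N (gen_ideal ?N qs) w s
      = Rdim ?N (gen_ideal ?N qs) (s - 1) - Kdim ?N (gen_ideal ?N qs) z (s - 1)"
    by (metis Suc_diff_1 less_eq_Suc_le One_nat_def)
  with colon quotient show ?thesis by simp
qed

end
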